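(* Let $n\in\mathbb{N}_0$, let $f\in C^{2n}(\mathbb{R}^d,\mathbb{R})$, $\underline a\in C^{2n}(\mathbb{R}^d,\mathbb{R}^d)$, $b\in C^{2n+1}(\mathbb{R}^d,\mathbb{R}^{d\times m})$, and let $L^0=\sum_{k=1}^d\tilde a^k\frac{\partial}{\partial x^k}+\frac12\sum_{k,l=1}^d\sum_{j=1}^m b^{k,j}b^{l,j}\frac{\partial^2}{\partial x^k\partial x^l}$ with $\tilde a^i=\underline a^i+\frac12\sum_{k=1}^d\sum_{l=1}^m b^{k,l}\frac{\partial b^{i,l}}{\partial x^k}$. Then for every $x_0\in\mathbb{R}^d$ $$(L^0)^n f(x_0)=\sum_{\substack{t\in LTS(S)\\ \rho(t)=n}}\ \sum_{j_1,\dots,j_{s(t)/2}=1}^m\frac{F(t)(x_0)}{2^{s(t)/2}},$$ where the elementary differentials $F(t)$ are formed with the drift $\underline a$ (not $\tilde a$) at deterministic nodes.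
   Context: Fix $d,m\ge1$, $f:\mathbb{R}^d\to\mathbb{R}$, $\underline a:\mathbb{R}^d\to\mathbb{R}^d$, $b:\mathbb{R}^d\to\mathbb{R}^{d\times m}$ with columns $b^j$ and entries $b^{k,j}$. A monotonically labelled coloured tree with $l$ nodes consists of nodes $1,\dots,l$, a father map $t':\{2,\dots,l\}\to\{1,\dots,l-1\}$ with $t'(i)<i$ (node 1 is the root), and a colour per node: $\gamma$ (root), $\tau$ (deterministic) or $\sigma_j$ (stochastic, index $j$). $LTS(S)$ is the set of trees obtainable thus: start with the single node $1$ coloured $\gamma$; at each step, if the current tree has $\lambda$ nodes and $k-1$ pairs of stochastic nodes have been added so far, either (a) add node $\lambda+1$ coloured $\tau$ with father any node in $\{1,\dots,\lambda\}$, or (b) add nodes $\lambda+1,\lambda+2$, both coloured $\sigma_{j_k}$ ($j_k$ a formal index variable), with $t'(\lambda+1)\in\{1,\dots,\lambda\}$ and $t'(\lambda+2)\in\{1,\dots,\lambda+1\}$ (node $\lambda+1$ may be the father of node $\lambda+2$). $d(t)$ = number of $\tau$-nodes, $s(t)$ = number of stochastic nodes (even; index variables $j_1,\dots,j_{s/2}$), $\rho(t)=d(t)+s(t)/2$. The index variables range over $\{1,\dots,m\}$ in the sums. Elementary differential: $g^{(k)}(x)(v_1,\dots,v_k)$ has $I$-th component $\sum_{J_1,\dots,J_k}\frac{\partial^k g^I(x)}{\partial x^{J_1}\cdots\partial x^{J_k}}v_1^{J_1}\cdots v_k^{J_k}$; for a tree with index values fixed, recursively for node $i$ with children $c_1,\dots,c_k$: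 $F_i(x)=g_i^{(k)}(x)(F_{c_1}(x),\dots,F_{c_k}(x))$, with $g_i=f$ for $\gamma$, $\underline a$ for $\tau$, $b^j$ for $\sigma_j$; $F(t):=F_1$. *)

theory Defs
  imports "HOL-Analysis.Analysis"
begin

definition pd :: "'d::finite \<Rightarrow> (real^'d \<Rightarrow> real) \<Rightarrow> real^'d \<Rightarrow> real" where
  "pd k g x = deriv (\<lambda>h. g (x + h *\<^sub>R axis k 1)) 0"

fun pds :: "'d::finite list \<Rightarrow> (real^'d \<Rightarrow> real) \<Rightarrow> real^'d \<Rightarrow> real" where
  "pds [] g = g"
| "pds (k # ks) g = pd k (pds ks g)"

definition Ck :: "nat \<Rightarrow> (real^'d::finite \<Rightarrow> real) \<Rightarrow> bool" where
  "Ck r g \<longleftrightarrow>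
     (\<forall>ks::'d list. length ks < r \<longrightarrow>
        (\<forall>i x. (\<lambda>h. pds ks g (x + h *\<^sub>R axis i 1)) differentiable (at 0))) \<and>
     (\<forall>ks::'d list. length ks \<le> r \<longrightarrow> continuous_on UNIV (pds ks g))"

text \<open>Colours: root gamma, deterministic tau, stochastic sigma with index-variable number k
  (meaning the formal index variable j_k).\<close>
datatype colour = Root | Det | Sto nat

text \<open>A tree with l nodes is a list of length l; entry i-1 is (father of node i, colour of node i).
  The root (node 1) has dummy father 0.\<close>
type_synonym ltree = "(nat \<times> colour) list"

definition s_nodes :: "ltree \<Rightarrow> nat" where
  "s_nodes t = length (filter (\<lambda>p. case snd p of Sto _ \<Rightarrow> True | _ \<Rightarrow> False) t)"

definition d_nodes :: "ltree \<Rightarrow> nat" where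
  "d_nodes t = length (filter (\<lambda>p. snd p = Det) t)"

definition rho :: "ltree \<Rightarrow> nat" where
  "rho t = d_nodes t + s_nodes t div 2"

inductive_set LTS :: "ltree set" where
  base: "[(0, Root)] \<in> LTS"
| det: "\<lbrakk>t \<in> LTS; 1 \<le> p; p \<le> length t\<rbrakk> \<Longrightarrow> t @ [(p, Det)] \<in> LTS"
| sto: "\<lbrakk>t \<in> LTS; 1 \<le> p; p \<le> length t; 1 \<le> q; q \<le> length t + 1\<rbrakk> \<Longrightarrow>
         t @ [(p, Sto (s_nodes t div 2 + 1)), (q, Sto (s_nodes t div 2 + 1))] \<in> LTS"

definition children :: "ltree \<Rightarrow> nat \<Rightarrow> nat list" where
  "children t i = filter (\<lambda>c. fst (t ! (c - 1)) = i) [i + 1 ..< length t + 1]"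

definition dapply :: "(real^'d::finite \<Rightarrow> real) \<Rightarrow> (real^'d \<Rightarrow> real^'d) list \<Rightarrow> real^'d \<Rightarrow> real" where
  "dapply h vs x = (\<Sum>Js \<in> {Js::'d list. length Js = length vs}.
      pds Js h x * (\<Prod>i<length vs. (vs ! i) x $ (Js ! i)))"

text \<open>Component I of the node function; js!(k-1) is the value of the index variable j_k.\<close>
fun node_fun :: "(real^'d::finite \<Rightarrow> real^'d) \<Rightarrow> (real^'d \<Rightarrow> real^'m::finite^'d) \<Rightarrow> 'm list
                  \<Rightarrow> colour \<Rightarrow> 'd \<Rightarrow> real^'d \<Rightarrow> real" where
  "node_fun a b js Det I = (\<lambda>y. a y $ I)"
| "node_fun a b js (Sto k) I = (\<lambda>y. b y $ I $ (js ! (k - 1)))"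
| "node_fun a b js Root I = (\<lambda>y. 0)"

text \<open>F_i for non-root nodes, computed with fuel (length t suffices since children have larger labels).\<close>
fun Fnode :: "nat \<Rightarrow> (real^'d::finite \<Rightarrow> real^'d) \<Rightarrow> (real^'d \<Rightarrow> real^'m::finite^'d) \<Rightarrow> 'm list
               \<Rightarrow> ltree \<Rightarrow> nat \<Rightarrow> real^'d \<Rightarrow> real^'d" where
  "Fnode 0 a b js t i = (\<lambda>x. 0)"
| "Fnode (Suc n) a b js t i = (\<lambda>x. \<chi> I. dapply (node_fun a b js (snd (t ! (i - 1))) I)
                                          (map (Fnode n a b js t) (children t i)) x)"

definition elemF :: "(real^'d::finite \<Rightarrow> real) \<Rightarrow> (real^'d \<Rightarrow> real^'d) \<Rightarrow> (real^'d \<Rightarrow> real^'m::finite^'d)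
                     \<Rightarrow> 'm list \<Rightarrow> ltree \<Rightarrow> real^'d \<Rightarrow> real" where
  "elemF f a b js t x = dapply f (map (Fnode (length t) a b js t) (children t 1)) x"

definition atil :: "(real^'d::finite \<Rightarrow> real^'d) \<Rightarrow> (real^'d \<Rightarrow> real^'m::finite^'d) \<Rightarrow> 'd \<Rightarrow> real^'d \<Rightarrow> real" where
  "atil a b i x = a x $ i + 1/2 * (\<Sum>k\<in>UNIV. \<Sum>l\<in>UNIV. b x $ k $ l * pd k (\<lambda>y. b y $ i $ l) x)"

definition L0 :: "(real^'d::finite \<Rightarrow> real^'d) \<Rightarrow> (real^'d \<Rightarrow> real^'m::finite^'d)
                  \<Rightarrow> (real^'d \<Rightarrow> real) \<Rightarrow> real^'d \<Rightarrow> real" where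
  "L0 a b g x = (\<Sum>k\<in>UNIV. atil a b k x * pd k g x)
     + 1/2 * (\<Sum>k\<in>UNIV. \<Sum>l\<in>UNIV. \<Sum>j\<in>UNIV. b x $ k $ j * b x $ l $ j * pd k (pd l g) x)"

end

theory Submission
  imports Defs
begin

(* With the Stratonovich-corrected drift the generator takes Hoermander's form
   L^0 = D_a + 1/2 sum_j D_{b^j}^2, where D_g u = sum_k g^k du/dx^k.  An elementary differential
   is multilinear in the node functions, so by the Leibniz rule and the symmetry of second
   derivatives D_g F(t) is the sum, over all nodes p of t, of F(t') where t' is t with a new leaf
   coloured by g attached to p.  Thus D_a attaches a tau-node anywhere, and D_{b^j}^2 attaches a
   pair of sigma_j-nodes whose second member may hang from the first: these are exactly the two
   growth steps of LTS(S), each raising rho by one, and the factor 1/2 per pair gives the weight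
   2^(-s(t)/2).  Induction on n yields the expansion; C^2n smoothness keeps every intermediate
   term twice differentiable. *)

section \<open>Partial derivatives and C^r functions\<close>

definition pdifferentiable :: "'d::finite \<Rightarrow> (real^'d \<Rightarrow> real) \<Rightarrow> real^'d \<Rightarrow> bool" where
  "pdifferentiable k g x \<longleftrightarrow> (\<lambda>h. g (x + h *\<^sub>R axis k 1)) differentiable (at 0)"

lemma DERIV_pd:
  "pdifferentiable k g x \<Longrightarrow> ((\<lambda>h. g (x + h *\<^sub>R axis k 1)) has_real_derivative pd k g x) (at 0)"
  unfolding pdifferentiable_def pd_def by (simp add: DERIV_deriv_iff_real_differentiable)

lemma pd_eqI: "((\<lambda>h. g (x + h *\<^sub>R axis k 1)) has_real_derivative D) (at 0) \<Longrightarrow> pd k g x = D"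
  unfolding pd_def by (rule DERIV_imp_deriv)

lemma pdifferentiableI:
  "((\<lambda>h. g (x + h *\<^sub>R axis k 1)) has_real_derivative D) (at 0) \<Longrightarrow> pdifferentiable k g x"
  unfolding pdifferentiable_def real_differentiable_def by blast

lemma pdifferentiable_add:
    "pdifferentiable k u x \<Longrightarrow> pdifferentiable k v x \<Longrightarrow> pdifferentiable k (\<lambda>y. u y + v y) x"
  and pd_add:
    "pdifferentiable k u x \<Longrightarrow> pdifferentiable k v x \<Longrightarrow> pd k (\<lambda>y. u y + v y) x = pd k u x + pd k v x"
  by (auto intro!: pdifferentiableI pd_eqI DERIV_add DERIV_pd)

lemma pdifferentiable_mult:
    "pdifferentiable k u x \<Longrightarrow> pdifferentiable k v x \<Longrightarrow> pdifferentiable k (\<lambda>y. u y * v y) x"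
  and pd_mult:
    "pdifferentiable k u x \<Longrightarrow> pdifferentiable k v x \<Longrightarrow>
       pd k (\<lambda>y. u y * v y) x = pd k u x * v x + u x * pd k v x"
  by (auto intro!: pdifferentiableI pd_eqI dest!: DERIV_pd dest: DERIV_mult simp: algebra_simps)

lemma pdifferentiable_const: "pdifferentiable k (\<lambda>y. c) x"
  and pd_const: "pd k (\<lambda>y. c) x = 0"
  by (auto intro!: pdifferentiableI[where D=0] pd_eqI)

lemma
  assumes "finite S" "\<And>i. i \<in> S \<Longrightarrow> pdifferentiable k (u i) x"
  shows pdifferentiable_sum: "pdifferentiable k (\<lambda>y. \<Sum>i\<in>S. u i y) x"
    and pd_sum: "pd k (\<lambda>y. \<Sum>i\<in>S. u i y) x = (\<Sum>i\<in>S. pd k (u i) x)"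
proof -
  have "((\<lambda>h. \<Sum>i\<in>S. u i (x + h *\<^sub>R axis k 1)) has_real_derivative (\<Sum>i\<in>S. pd k (u i) x)) (at 0)"
    using assms by (intro DERIV_sum DERIV_pd) auto
  then show "pdifferentiable k (\<lambda>y. \<Sum>i\<in>S. u i y) x" "pd k (\<lambda>y. \<Sum>i\<in>S. u i y) x = (\<Sum>i\<in>S. pd k (u i) x)"
    by (auto intro: pdifferentiableI pd_eqI)
qed

lemma pdifferentiable_pd_prod:
  assumes "finite S" "\<And>i. i \<in> S \<Longrightarrow> pdifferentiable k (u i) x"
  shows "pdifferentiable k (\<lambda>y. \<Prod>i\<in>S. u i y) x \<and>
    pd k (\<lambda>y. \<Prod>i\<in>S. u i y) x = (\<Sum>i\<in>S. pd k (u i) x * (\<Prod>j\<in>S-{i}. u j x))"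
  using assms
proof (induction S rule: finite_induct)
  case empty
  then show ?case by (simp add: pdifferentiable_const pd_const)
next
  case (insert a S)
  have prod_remove: "(\<Prod>j\<in>insert a S-{i}. u j x) = u a x * (\<Prod>j\<in>S-{i}. u j x)" if "i \<in> S" for i
  proof -
    have "insert a S - {i} = insert a (S - {i})" using insert.hyps(2) that by auto
    then show ?thesis using insert.hyps by simp
  qed
  have "(\<Sum>i\<in>insert a S. pd k (u i) x * (\<Prod>j\<in>insert a S-{i}. u j x))
     = pd k (u a) x * (\<Prod>j\<in>S. u j x) + u a x * (\<Sum>i\<in>S. pd k (u i) x * (\<Prod>j\<in>S-{i}. u j x))"
    using insert.hyps by (simp add: prod_remove sum_distrib_left mult.left_commute cong: sum.cong)
  then show ?case
    using insert by (simp add: pdifferentiable_mult pd_mult)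
qed

lemma
  assumes "finite S" "\<And>i. i \<in> S \<Longrightarrow> pdifferentiable k (u i) x"
  shows pdifferentiable_prod: "pdifferentiable k (\<lambda>y. \<Prod>i\<in>S. u i y) x"
    and pd_prod: "pd k (\<lambda>y. \<Prod>i\<in>S. u i y) x = (\<Sum>i\<in>S. pd k (u i) x * (\<Prod>j\<in>S-{i}. u j x))"
  using pdifferentiable_pd_prod[of S k u x] assms by auto

lemma pds_snoc: "pds (ks @ [k]) g = pds ks (pd k g)"
  by (induction ks) auto

lemma Ck_0: "Ck 0 g \<longleftrightarrow> continuous_on UNIV g"
  unfolding Ck_def by auto

lemma Ck_Suc:
  "Ck (Suc r) g \<longleftrightarrow> continuous_on UNIV g \<and> (\<forall>i x. pdifferentiable i g x) \<and> (\<forall>k. Ck r (pd k g))"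
proof
  assume A: "Ck (Suc r) g"
  have D: "\<forall>ks::'a list. length ks < Suc r \<longrightarrow>
      (\<forall>i x. (\<lambda>h. pds ks g (x + h *\<^sub>R axis i 1)) differentiable (at 0))"
    and C: "\<forall>ks::'a list. length ks \<le> Suc r \<longrightarrow> continuous_on UNIV (pds ks g)"
    using A unfolding Ck_def by blast+
  have "Ck r (pd k g)" for k
    unfolding Ck_def
  proof (intro conjI allI impI)
    fix ks :: "'a list" and i x assume "length ks < r"
    then show "(\<lambda>h. pds ks (pd k g) (x + h *\<^sub>R axis i 1)) differentiable at 0"
      using D[rule_format, of "ks @ [k]"] by (simp add: pds_snoc)
  next
    fix ks :: "'a list" assume "length ks \<le> r"
    then show "continuous_on UNIV (pds ks (pd k g))"
      using C[rule_format, of "ks @ [k]"] by (simp add: pds_snoc)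
  qed
  then show "continuous_on UNIV g \<and> (\<forall>i x. pdifferentiable i g x) \<and> (\<forall>k. Ck r (pd k g))"
    using C[rule_format, of "[]"] D[rule_format, of "[]"] by (simp add: pdifferentiable_def)
next
  assume A: "continuous_on UNIV g \<and> (\<forall>i x. pdifferentiable i g x) \<and> (\<forall>k. Ck r (pd k g))"
  show "Ck (Suc r) g" unfolding Ck_def
  proof (intro conjI allI impI)
    fix ks :: "'a list" and i x assume "length ks < Suc r"
    then show "(\<lambda>h. pds ks g (x + h *\<^sub>R axis i 1)) differentiable at 0"
      using A unfolding Ck_def pdifferentiable_def by (cases ks rule: rev_exhaust) (auto simp: pds_snoc)
  next
    fix ks :: "'a list" assume "length ks \<le> Suc r"
    then show "continuous_on UNIV (pds ks g)"
      using A unfolding Ck_def by (cases ks rule: rev_exhaust) (auto simp: pds_snoc)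
  qed
qed

lemma Ck_mono: "Ck r g \<Longrightarrow> r' \<le> r \<Longrightarrow> Ck r' g"
  unfolding Ck_def by auto

lemma Ck_pd: "Ck (Suc r) g \<Longrightarrow> Ck r (pd k g)"
  by (simp add: Ck_Suc)

lemma Ck_imp_pdifferentiable: "Ck r g \<Longrightarrow> 0 < r \<Longrightarrow> pdifferentiable k g x"
  by (cases r) (auto simp: Ck_Suc)

lemma Ck_pds: "length ks \<le> r \<Longrightarrow> Ck r g \<Longrightarrow> Ck (r - length ks) (pds ks g)"
proof (induction ks)
  case (Cons k ks)
  then have "Ck (Suc (r - length (k#ks))) (pds ks g)" by (simp add: Suc_diff_Suc)
  then show ?case by (simp add: Ck_pd)
qed simp

lemma Ck_add: "Ck r u \<Longrightarrow> Ck r v \<Longrightarrow> Ck r (\<lambda>x. u x + v x)"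
proof (induction r arbitrary: u v)
  case 0 then show ?case by (simp add: Ck_0 continuous_on_add)
next
  case (Suc r)
  have pd_eq: "pd k (\<lambda>x. u x + v x) = (\<lambda>x. pd k u x + pd k v x)" for k
    using Suc.prems by (auto simp: Ck_Suc pd_add)
  show ?case using Suc by (auto simp: Ck_Suc continuous_on_add pdifferentiable_add pd_eq)
qed

lemma Ck_const: "Ck r (\<lambda>x. c)"
proof (induction r arbitrary: c)
  case 0 then show ?case by (simp add: Ck_0)
next
  case (Suc r)
  have pd_eq: "pd k (\<lambda>x. c) = (\<lambda>x. 0)" for k by (auto simp: pd_const)
  show ?case using Suc by (auto simp: Ck_Suc pdifferentiable_const pd_eq)
qed

lemma Ck_mult: "Ck r u \<Longrightarrow> Ck r v \<Longrightarrow> Ck r (\<lambda>x. u x * v x)"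
proof (induction r arbitrary: u v)
  case 0 then show ?case by (simp add: Ck_0 continuous_on_mult)
next
  case (Suc r)
  then have u: "continuous_on UNIV u" "\<And>i x. pdifferentiable i u x" "\<And>k. Ck r (pd k u)" "Ck r u"
    and v: "continuous_on UNIV v" "\<And>i x. pdifferentiable i v x" "\<And>k. Ck r (pd k v)" "Ck r v"
    by (auto simp: Ck_Suc intro: Ck_mono[of "Suc r"])
  have "pd k (\<lambda>x. u x * v x) = (\<lambda>x. pd k u x * v x + u x * pd k v x)" for k
    using u v by (auto simp: pd_mult)
  then have "Ck r (pd k (\<lambda>x. u x * v x))" for k
    using u v by (simp add: Ck_add Suc.IH)
  then show ?case unfolding Ck_Suc using u v by (auto intro: continuous_on_mult pdifferentiable_mult)
qed

lemma Ck_sum: "finite S \<Longrightarrow> (\<And>i. i \<in> S \<Longrightarrow> Ck r (u i)) \<Longrightarrow> Ck r (\<lambda>x. \<Sum>i\<in>S. u i x)"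
  by (induction S rule: finite_induct) (auto simp: Ck_const intro!: Ck_add)

lemma Ck_prod: "finite S \<Longrightarrow> (\<And>i. i \<in> S \<Longrightarrow> Ck r (u i)) \<Longrightarrow> Ck r (\<lambda>x. \<Prod>i\<in>S. u i x)"
  by (induction S rule: finite_induct) (auto simp: Ck_const intro!: Ck_mult)

lemma Ck_divide: "Ck r u \<Longrightarrow> Ck r (\<lambda>x. u x / c)"
  using Ck_mult[OF _ Ck_const, of r u "1 / c"] by simp


section \<open>Multilinear differentials and symmetry of second derivatives\<close>

lemma finite_lists_length_eq_UNIV: "finite {xs::'a::finite list. length xs = n}"
  using finite_lists_length_eq[of "UNIV::'a set" n] by simp

lemma sum_lists_length_Suc:
  "(\<Sum>xs\<in>{xs::'a::finite list. length xs = Suc n}. F xs) =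
   (\<Sum>xs\<in>{xs. length xs = n}. \<Sum>y\<in>UNIV. F (xs @ [y]))"
proof -
  have bij: "bij_betw (\<lambda>(xs, y). xs @ [y]) ({xs::'a list. length xs = n} \<times> UNIV) {xs. length xs = Suc n}"
    by (rule bij_betwI[where g = "\<lambda>xs. (butlast xs, last xs)"])
       (auto intro: append_butlast_last_id)
  have "(\<Sum>xs\<in>{xs::'a list. length xs = Suc n}. F xs) = (\<Sum>(xs, y)\<in>{xs. length xs = n} \<times> UNIV. F (xs @ [y]))"
    using sum.reindex_bij_betw[OF bij, of F] by (simp add: case_prod_unfold)
  then show ?thesis by (simp add: sum.cartesian_product)
qed

lemma dapply_altdef:
  "dapply h vs = (\<lambda>x. \<Sum>Js \<in> {Js. length Js = length vs}. pds Js h x * (\<Prod>i<length vs. (vs ! i) x $ (Js ! i)))"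
  by (intro ext) (simp only: dapply_def)

lemma dapply_Nil: "dapply h [] x = h x"
proof -
  have "{Js::'a list. length Js = 0} = {[]}" by auto
  then show ?thesis unfolding dapply_def by simp
qed

lemma Ck_dapply:
  "Ck (r + length vs) h \<Longrightarrow> (\<And>v J. v \<in> set vs \<Longrightarrow> Ck r (\<lambda>x. v x $ J)) \<Longrightarrow> Ck r (dapply h vs)"
proof (unfold dapply_altdef, intro Ck_sum Ck_mult Ck_prod finite_lists_length_eq_UNIV)
  fix Js :: "'a list" assume "Ck (r + length vs) h" "Js \<in> {Js. length Js = length vs}"
  then show "Ck r (pds Js h)" using Ck_pds[of Js "r + length vs" h] by simp
qed auto

lemma line_DERIV_pd:
  assumes "pdifferentiable k u (y + t *\<^sub>R axis k 1)"
  shows "((\<lambda>s. u (y + s *\<^sub>R axis k 1)) has_real_derivative pd k u (y + t *\<^sub>R axis k 1)) (at t)"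
proof -
  let ?z = "y + t *\<^sub>R axis k 1"
  have "((\<lambda>h. u (?z + h *\<^sub>R axis k 1)) has_real_derivative pd k u ?z) (at (t + - t))"
    using DERIV_pd[OF assms] by simp
  then have "((\<lambda>s. u (?z + (s + - t) *\<^sub>R axis k 1)) has_real_derivative pd k u ?z) (at t)"
    by (rule DERIV_shift[THEN iffD1])
  moreover have "(\<lambda>s. u (?z + (s + - t) *\<^sub>R axis k 1)) = (\<lambda>s. u (y + s *\<^sub>R axis k 1))"
    by (rule ext) (simp add: algebra_simps)
  ultimately show ?thesis by simp
qed

lemma second_difference_mean_value:
  fixes u :: "real^'d::finite \<Rightarrow> real"
  assumes "\<And>z. pdifferentiable k u z" and "\<And>z. pdifferentiable l (pd k u) z" and "s > 0"
  obtains \<sigma> \<tau> where "0 < \<sigma>" "\<sigma> < s" "0 < \<tau>" "\<tau> < s"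
    "u (x + s *\<^sub>R axis k 1 + s *\<^sub>R axis l 1) - u (x + s *\<^sub>R axis k 1) - u (x + s *\<^sub>R axis l 1) + u x
      = s * s * pd l (pd k u) (x + \<sigma> *\<^sub>R axis k 1 + \<tau> *\<^sub>R axis l 1)"
proof -
  define ek where "ek = (axis k 1 :: real^'d)"
  define el where "el = (axis l 1 :: real^'d)"
  define \<phi> where "\<phi> \<sigma> = u (x + s *\<^sub>R el + \<sigma> *\<^sub>R ek) - u (x + \<sigma> *\<^sub>R ek)" for \<sigma>
  define \<phi>' where "\<phi>' \<sigma> = pd k u (x + s *\<^sub>R el + \<sigma> *\<^sub>R ek) - pd k u (x + \<sigma> *\<^sub>R ek)" for \<sigma>
  have "DERIV \<phi> \<sigma> :> \<phi>' \<sigma>" for \<sigma>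
    unfolding \<phi>_def \<phi>'_def ek_def by (intro DERIV_diff line_DERIV_pd assms)
  then obtain \<sigma> where \<sigma>: "0 < \<sigma>" "\<sigma> < s" "\<phi> s - \<phi> 0 = s * \<phi>' \<sigma>"
    using MVT2[OF \<open>s > 0\<close>, of \<phi> \<phi>'] by auto
  define \<psi> where "\<psi> \<tau> = pd k u (x + \<sigma> *\<^sub>R ek + \<tau> *\<^sub>R el)" for \<tau>
  define \<psi>' where "\<psi>' \<tau> = pd l (pd k u) (x + \<sigma> *\<^sub>R ek + \<tau> *\<^sub>R el)" for \<tau>
  have "DERIV \<psi> \<tau> :> \<psi>' \<tau>" for \<tau>
    unfolding \<psi>_def \<psi>'_def el_def by (intro line_DERIV_pd assms)
  then obtain \<tau> where \<tau>: "0 < \<tau>" "\<tau> < s" "\<psi> s - \<psi> 0 = s * \<psi>' \<tau>"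
    using MVT2[OF \<open>s > 0\<close>, of \<psi> \<psi>'] by auto
  have "\<psi> s - \<psi> 0 = \<phi>' \<sigma>"
    unfolding \<psi>_def \<phi>'_def by (simp add: ac_simps)
  then have "\<phi> s - \<phi> 0 = s * s * pd l (pd k u) (x + \<sigma> *\<^sub>R ek + \<tau> *\<^sub>R el)"
    using \<sigma>(3) \<tau>(3) unfolding \<psi>'_def by simp
  moreover have "\<phi> s - \<phi> 0 = u (x + s *\<^sub>R ek + s *\<^sub>R el) - u (x + s *\<^sub>R ek) - u (x + s *\<^sub>R el) + u x"
    unfolding \<phi>_def by (simp add: ac_simps)
  ultimately show ?thesis
    using that[OF \<sigma>(1,2) \<tau>(1,2)] unfolding ek_def el_def by simp
qed

lemma dist_axis_pair_less:
  fixes x :: "real^'d::finite"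
  assumes "0 < \<alpha>" "\<alpha> < s" "0 < \<beta>" "\<beta> < s"
  shows "dist (x + \<alpha> *\<^sub>R axis i 1 + \<beta> *\<^sub>R axis j 1) x < 2 * s"
proof -
  have "dist (x + \<alpha> *\<^sub>R axis i 1 + \<beta> *\<^sub>R axis j 1) x \<le> norm (\<alpha> *\<^sub>R axis i (1::real)) + norm (\<beta> *\<^sub>R axis j (1::real))"
    by (simp add: dist_norm norm_triangle_ineq del: norm_scaleR)
  also have "\<dots> = \<alpha> + \<beta>" using assms by simp
  finally show ?thesis using assms by simp
qed

text \<open>Schwarz's theorem: both mixed partials are limits of the same second difference quotient.\<close>
lemma pd_commute:
  fixes u :: "real^'d::finite \<Rightarrow> real"
  assumes "Ck 2 u"
  shows "pd k (pd l u) x = pd l (pd k u) x"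
proof (rule ccontr)
  assume ne: "pd k (pd l u) x \<noteq> pd l (pd k u) x"
  let ?A = "pd l (pd k u)" and ?B = "pd k (pd l u)"
  have C2: "Ck (Suc (Suc 0)) u" using assms by (simp add: numeral_2_eq_2)
  have pu: "\<And>i z. pdifferentiable i u z"
    and pk: "\<And>i z. pdifferentiable i (pd k u) z" "\<And>i z. pdifferentiable i (pd l u) z"
    and cA: "continuous_on UNIV ?A" and cB: "continuous_on UNIV ?B"
    using C2 by (simp_all add: Ck_Suc Ck_0)
  define e where "e = \<bar>?A x - ?B x\<bar> / 2"
  have e: "e > 0" using ne unfolding e_def by auto
  obtain d1 where d1: "d1 > 0" "\<And>y. dist y x < d1 \<Longrightarrow> dist (?A y) (?A x) < e"
    using cA e unfolding continuous_on_iff by blast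
  obtain d2 where d2: "d2 > 0" "\<And>y. dist y x < d2 \<Longrightarrow> dist (?B y) (?B x) < e"
    using cB e unfolding continuous_on_iff by blast
  define s where "s = min d1 d2 / 3"
  have s: "s > 0" "2 * s < d1" "2 * s < d2" using d1 d2 unfolding s_def by auto
  obtain \<sigma> \<tau> where st: "0 < \<sigma>" "\<sigma> < s" "0 < \<tau>" "\<tau> < s"
    "u (x + s *\<^sub>R axis k 1 + s *\<^sub>R axis l 1) - u (x + s *\<^sub>R axis k 1) - u (x + s *\<^sub>R axis l 1) + u x
      = s * s * ?A (x + \<sigma> *\<^sub>R axis k 1 + \<tau> *\<^sub>R axis l 1)"
    using second_difference_mean_value[OF pu pk(1) s(1)] by blast
  obtain \<sigma>' \<tau>' where st': "0 < \<sigma>'" "\<sigma>' < s" "0 < \<tau>'" "\<tau>' < s"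
    "u (x + s *\<^sub>R axis l 1 + s *\<^sub>R axis k 1) - u (x + s *\<^sub>R axis l 1) - u (x + s *\<^sub>R axis k 1) + u x
      = s * s * ?B (x + \<sigma>' *\<^sub>R axis l 1 + \<tau>' *\<^sub>R axis k 1)"
    using second_difference_mean_value[OF pu pk(2) s(1)] by blast
  have swap: "x + s *\<^sub>R axis l 1 + s *\<^sub>R axis k 1 = x + s *\<^sub>R axis k 1 + s *\<^sub>R axis l 1"
    by (simp add: ac_simps)
  have "s * s * ?A (x + \<sigma> *\<^sub>R axis k 1 + \<tau> *\<^sub>R axis l 1) = s * s * ?B (x + \<sigma>' *\<^sub>R axis l 1 + \<tau>' *\<^sub>R axis k 1)"
    using st(5) st'(5) unfolding swap by linarith
  then have eq: "?A (x + \<sigma> *\<^sub>R axis k 1 + \<tau> *\<^sub>R axis l 1) = ?B (x + \<sigma>' *\<^sub>R axis l 1 + \<tau>' *\<^sub>R axis k 1)"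
    using s by simp
  have "dist (?A (x + \<sigma> *\<^sub>R axis k 1 + \<tau> *\<^sub>R axis l 1)) (?A x) < e"
    "dist (?B (x + \<sigma>' *\<^sub>R axis l 1 + \<tau>' *\<^sub>R axis k 1)) (?B x) < e"
    using d1(2) d2(2) dist_axis_pair_less[OF st(1-4)] dist_axis_pair_less[OF st'(1-4)] s by (meson less_trans)+
  then have "\<bar>?A x - ?B x\<bar> < 2 * e" using eq by (simp add: dist_real_def)
  then show False unfolding e_def by simp
qed

lemma pds_Cons_eq_snoc: "Ck (Suc (length Js)) h \<Longrightarrow> pds (k # Js) h = pds (Js @ [k]) h"
proof (induction Js)
  case (Cons j Js)
  have C: "Ck 2 (pds Js h)" using Ck_pds[of Js "Suc (Suc (length Js))" h] Cons.prems by simp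
  have "pds (k # Js) h = pds (Js @ [k]) h"
    using Cons.IH Ck_mono[OF Cons.prems, of "Suc (length Js)"] by simp
  then have "pd j (pd k (pds Js h)) = pds ((j # Js) @ [k]) h" by simp
  moreover have "pd k (pd j (pds Js h)) = pd j (pd k (pds Js h))"
    using pd_commute[OF C] by (rule ext)
  ultimately show ?case by simp
qed simp


section \<open>Derivatives along vector fields and the Leibniz rule\<close>

definition lie_deriv :: "(real^'d::finite \<Rightarrow> real^'d) \<Rightarrow> (real^'d \<Rightarrow> real) \<Rightarrow> real^'d \<Rightarrow> real" where
  "lie_deriv g u x = (\<Sum>k\<in>UNIV. g x $ k * pd k u x)"

definition lie_deriv_vec :: "(real^'d::finite \<Rightarrow> real^'d) \<Rightarrow> (real^'d \<Rightarrow> real^'d) \<Rightarrow> real^'d \<Rightarrow> real^'d" where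
  "lie_deriv_vec g F x = (\<chi> I. lie_deriv g (\<lambda>y. F y $ I) x)"

lemma lie_deriv_sum:
  assumes "finite A" "\<And>i k. i \<in> A \<Longrightarrow> pdifferentiable k (u i) x"
  shows "lie_deriv g (\<lambda>y. \<Sum>i\<in>A. u i y) x = (\<Sum>i\<in>A. lie_deriv g (u i) x)"
proof -
  have "lie_deriv g (\<lambda>y. \<Sum>i\<in>A. u i y) x = (\<Sum>k\<in>UNIV. \<Sum>i\<in>A. g x $ k * pd k (u i) x)"
    unfolding lie_deriv_def using assms by (simp add: pd_sum sum_distrib_left)
  also have "\<dots> = (\<Sum>i\<in>A. lie_deriv g (u i) x)" unfolding lie_deriv_def by (rule sum.swap)
  finally show ?thesis .
qed

lemma lie_deriv_divide:
  assumes "\<And>k. pdifferentiable k u x"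
  shows "lie_deriv g (\<lambda>y. u y / c) x = lie_deriv g u x / c"
proof -
  have "pd k (\<lambda>y. u y / c) x = pd k u x / c" for k
    using pd_mult[OF assms pdifferentiable_const, of k "1 / c"] by (simp add: pd_const)
  then show ?thesis unfolding lie_deriv_def by (simp add: sum_divide_distrib)
qed

lemma lie_deriv_sum_divide:
  assumes "finite A" "\<And>i k y. i \<in> A \<Longrightarrow> pdifferentiable k (u i) y"
  shows "lie_deriv g (\<lambda>y. (\<Sum>i\<in>A. u i y) / c) x = (\<Sum>i\<in>A. lie_deriv g (u i) x) / c"
  using assms by (simp add: lie_deriv_divide lie_deriv_sum pdifferentiable_sum)

lemma Ck_lie_deriv:
  assumes "Ck (Suc r) u" "\<And>k. Ck r (\<lambda>y. g y $ k)"
  shows "Ck r (lie_deriv g u)"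
proof -
  have "Ck r (\<lambda>x. \<Sum>k\<in>UNIV. g x $ k * pd k u x)"
    using assms by (intro Ck_sum Ck_mult Ck_pd) auto
  then show ?thesis unfolding lie_deriv_def .
qed

lemma dapply_snoc: "dapply h (vs @ [g]) x = (\<Sum>k\<in>UNIV. g x $ k * dapply (pd k h) vs x)"
proof -
  let ?S = "{Js. length Js = length vs}" and ?P = "\<lambda>Js. \<Prod>i<length vs. (vs ! i) x $ (Js ! i)"
  have "dapply h (vs @ [g]) x = (\<Sum>Js\<in>{Js. length Js = Suc (length vs)}.
      pds Js h x * (\<Prod>i<Suc (length vs). ((vs @ [g]) ! i) x $ (Js ! i)))"
    unfolding dapply_def by simp
  also have "\<dots> = (\<Sum>Js\<in>?S. \<Sum>k\<in>UNIV.
      pds (Js @ [k]) h x * (\<Prod>i<Suc (length vs). ((vs @ [g]) ! i) x $ ((Js @ [k]) ! i)))"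
    by (rule sum_lists_length_Suc)
  also have "\<dots> = (\<Sum>Js\<in>?S. \<Sum>k\<in>UNIV. g x $ k * (pds Js (pd k h) x * ?P Js))"
  proof (intro sum.cong refl)
    fix Js :: "'a list" and k :: 'a assume "Js \<in> ?S"
    then have "(\<Prod>i<length vs. ((vs @ [g]) ! i) x $ ((Js @ [k]) ! i)) = ?P Js"
      by (intro prod.cong) (auto simp: nth_append)
    then show "pds (Js @ [k]) h x * (\<Prod>i<Suc (length vs). ((vs @ [g]) ! i) x $ ((Js @ [k]) ! i))
        = g x $ k * (pds Js (pd k h) x * ?P Js)"
      using \<open>Js \<in> ?S\<close> by (simp add: prod.lessThan_Suc nth_append pds_snoc)
  qed
  also have "\<dots> = (\<Sum>k\<in>UNIV. g x $ k * dapply (pd k h) vs x)"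
    unfolding dapply_def by (subst sum.swap) (simp add: sum_distrib_left)
  finally show ?thesis .
qed

lemma dapply_update:
  assumes "q < length vs"
  shows "dapply h (vs[q := W]) x = (\<Sum>Js\<in>{Js. length Js = length vs}.
     pds Js h x * (W x $ (Js ! q) * (\<Prod>i\<in>{..<length vs}-{q}. (vs ! i) x $ (Js ! i))))"
proof -
  have "(\<Prod>i<length vs. (vs[q := W] ! i) x $ (Js ! i))
      = W x $ (Js ! q) * (\<Prod>i\<in>{..<length vs}-{q}. (vs ! i) x $ (Js ! i))" for Js
  proof -
    have "(\<Prod>i<length vs. (vs[q := W] ! i) x $ (Js ! i))
        = (vs[q := W] ! q) x $ (Js ! q) * (\<Prod>i\<in>{..<length vs}-{q}. (vs[q := W] ! i) x $ (Js ! i))"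
      using assms by (subst prod.remove[of _ q]) auto
    moreover have "(\<Prod>i\<in>{..<length vs}-{q}. (vs[q := W] ! i) x $ (Js ! i))
        = (\<Prod>i\<in>{..<length vs}-{q}. (vs ! i) x $ (Js ! i))"
      by (rule prod.cong) auto
    ultimately show ?thesis using assms by simp
  qed
  then show ?thesis unfolding dapply_def by simp
qed

lemma dapply_update_sum:
  assumes "q < length vs" "finite P"
  shows "dapply h (vs[q := (\<lambda>x. \<Sum>p\<in>P. w p x)]) x = (\<Sum>p\<in>P. dapply h (vs[q := w p]) x)"
  using assms
  by (simp add: dapply_update sum_component sum_distrib_left sum_distrib_right
      sum.swap[of _ P] del: vec_lambda_beta)

lemma pd_dapply:
  assumes h: "Ck (Suc (length vs)) h"
    and v: "\<And>v J y. v \<in> set vs \<Longrightarrow> pdifferentiable k (\<lambda>y. v y $ J) y"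
  shows "pd k (dapply h vs) x = dapply (pd k h) vs x +
    (\<Sum>q<length vs. \<Sum>Js\<in>{Js. length Js = length vs}. pds Js h x *
       (pd k (\<lambda>y. (vs ! q) y $ (Js ! q)) x * (\<Prod>i\<in>{..<length vs}-{q}. (vs ! i) x $ (Js ! i))))"
proof -
  define S where "S = {Js::'a list. length Js = length vs}"
  define P where "P Js y = (\<Prod>i<length vs. (vs ! i) y $ (Js ! i))" for Js y
  have pv: "pdifferentiable k (\<lambda>y. (vs ! i) y $ J) y" if "i < length vs" for i J y
    using that v by simp
  have pP: "pdifferentiable k (P Js) y" for Js y
    unfolding P_def using pv by (intro pdifferentiable_prod) auto
  have dP: "pd k (P Js) x = (\<Sum>q<length vs. pd k (\<lambda>y. (vs ! q) y $ (Js ! q)) x *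
      (\<Prod>i\<in>{..<length vs}-{q}. (vs ! i) x $ (Js ! i)))" for Js
    unfolding P_def using pv by (intro pd_prod) auto
  have pH: "pdifferentiable k (pds Js h) y" if "length Js = length vs" for Js y
    using that h Ck_pds[of Js "Suc (length vs)" h] by (intro Ck_imp_pdifferentiable) auto
  have swap: "pd k (pds Js h) = pds Js (pd k h)" if "length Js = length vs" for Js
    using pds_Cons_eq_snoc[of Js h k] that h by (simp add: pds_snoc)
  have "pd k (dapply h vs) x = (\<Sum>Js\<in>S. pd k (\<lambda>y. pds Js h y * P Js y) x)"
    unfolding dapply_altdef S_def[symmetric] P_def[symmetric]
    by (rule pd_sum) (auto simp: S_def finite_lists_length_eq_UNIV intro!: pdifferentiable_mult pH pP)
  also have "\<dots> = (\<Sum>Js\<in>S. pds Js (pd k h) x * P Js x + pds Js h x * pd k (P Js) x)"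
    by (rule sum.cong[OF refl]) (simp add: S_def pd_mult pH pP swap)
  also have "\<dots> = dapply (pd k h) vs x + (\<Sum>q<length vs. \<Sum>Js\<in>S. pds Js h x *
       (pd k (\<lambda>y. (vs ! q) y $ (Js ! q)) x * (\<Prod>i\<in>{..<length vs}-{q}. (vs ! i) x $ (Js ! i))))"
    unfolding dapply_def S_def[symmetric] P_def[symmetric] dP
    by (simp add: sum.distrib sum_distrib_left sum.swap[of _ S] mult_ac)
  finally show ?thesis unfolding S_def .
qed

text \<open>When the derivative falls on the coefficient pds Js h it prepends k to Js, whereas the
  new argument g of dapply h (vs @ [g]) is paired with an appended index: this is where the
  symmetry of partial derivatives enters.\<close>
lemma lie_deriv_dapply:
  assumes "Ck (Suc (length vs)) h"
    and "\<And>v J k y. v \<in> set vs \<Longrightarrow> pdifferentiable k (\<lambda>y. v y $ J) y"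
  shows "lie_deriv g (dapply h vs) x =
    dapply h (vs @ [g]) x + (\<Sum>q<length vs. dapply h (vs[q := lie_deriv_vec g (vs ! q)]) x)"
proof -
  let ?S = "{Js. length Js = length vs}" and ?R = "\<lambda>Js q. \<Prod>i\<in>{..<length vs}-{q}. (vs ! i) x $ (Js ! i)"
  let ?D = "\<lambda>k Js q. pd k (\<lambda>y. (vs ! q) y $ (Js ! q)) x"
  have "(\<Sum>k\<in>UNIV. g x $ k * (\<Sum>q<length vs. \<Sum>Js\<in>?S. pds Js h x * (?D k Js q * ?R Js q)))
      = (\<Sum>q<length vs. \<Sum>k\<in>UNIV. \<Sum>Js\<in>?S. g x $ k * (pds Js h x * (?D k Js q * ?R Js q)))"
    by (simp add: sum_distrib_left sum.swap[of _ UNIV "{..<length vs}"])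
  also have "\<dots> = (\<Sum>q<length vs. \<Sum>Js\<in>?S. \<Sum>k\<in>UNIV. g x $ k * (pds Js h x * (?D k Js q * ?R Js q)))"
    by (intro sum.cong refl sum.swap)
  also have "\<dots> = (\<Sum>q<length vs. dapply h (vs[q := lie_deriv_vec g (vs ! q)]) x)"
    by (simp add: dapply_update lie_deriv_vec_def lie_deriv_def sum_distrib_left sum_distrib_right mult_ac)
  finally show ?thesis
    using assms by (simp add: lie_deriv_def pd_dapply dapply_snoc distrib_left sum.distrib)
qed


section \<open>Differentiating elementary differentials grows the tree\<close>

lemma mem_children_iff: "c \<in> set (children t i) \<longleftrightarrow> i < c \<and> c \<le> length t \<and> fst (t ! (c - 1)) = i"
  unfolding children_def by auto

lemma distinct_children: "distinct (children t i)"
  unfolding children_def by simp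

lemma length_children_le: "length (children t i) \<le> length t - i"
  unfolding children_def by (rule order_trans[OF length_filter_le]) (simp; linarith)

lemma children_append:
  assumes "i \<le> length t"
  shows "children (t @ [(p, col)]) i = children t i @ (if p = i then [Suc (length t)] else [])"
proof -
  have "filter (\<lambda>c. fst ((t @ [(p, col)]) ! (c - 1)) = i) [i + 1 ..< length t + 1]
      = filter (\<lambda>c. fst (t ! (c - 1)) = i) [i + 1 ..< length t + 1]"
    by (rule filter_cong) (auto simp: nth_append)
  then show ?thesis using assms unfolding children_def by (simp add: nth_append)
qed

lemma Fnode_fuel_cong:
  assumes "1 \<le> i" "i \<le> length t" "length t + 1 - i \<le> n" "length t + 1 - i \<le> n'"
  shows "Fnode n a b js t i = Fnode n' a b js t i"
  using assms
proof (induction n arbitrary: n' i)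
  case (Suc n)
  then obtain n'' where n': "n' = Suc n''" by (cases n') auto
  have eq: "map (Fnode n a b js t) (children t i) = map (Fnode n'' a b js t) (children t i)"
    using Suc.prems n' by (intro map_cong refl Suc.IH) (auto simp: mem_children_iff)
  show ?case unfolding n' Fnode.simps(2) eq ..
qed simp

text \<open>F_i of the paper; the fuel length t of Fnode suffices because children carry larger
  labels than their father.\<close>
definition node_diff :: "(real^'d::finite \<Rightarrow> real^'d) \<Rightarrow> (real^'d \<Rightarrow> real^'m::finite^'d) \<Rightarrow> 'm list
    \<Rightarrow> ltree \<Rightarrow> nat \<Rightarrow> real^'d \<Rightarrow> real^'d" where
  "node_diff a b js t i = Fnode (length t) a b js t i"

lemma node_diff_unfold:
  assumes "1 \<le> i" "i \<le> length t"
  shows "node_diff a b js t i =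
    (\<lambda>x. \<chi> I. dapply (node_fun a b js (snd (t ! (i - 1))) I) (map (node_diff a b js t) (children t i)) x)"
proof -
  obtain l where l: "length t = Suc l" using assms by (cases "length t") auto
  have eq: "map (Fnode l a b js t) (children t i) = map (Fnode (Suc l) a b js t) (children t i)"
    using assms l by (intro map_cong refl Fnode_fuel_cong) (auto simp: mem_children_iff)
  show ?thesis unfolding node_diff_def l Fnode.simps(2) eq ..
qed

lemma node_diff_component:
  assumes "1 \<le> i" "i \<le> length t"
  shows "(\<lambda>x. node_diff a b js t i x $ I) =
    dapply (node_fun a b js (snd (t ! (i - 1))) I) (map (node_diff a b js t) (children t i))"
  by (subst node_diff_unfold[OF assms]) simp

lemma elemF_node_diff: "elemF f a b js t = dapply f (map (node_diff a b js t) (children t 1))"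
  unfolding elemF_def node_diff_def by (rule ext) simp

lemma node_diff_new_leaf:
  "node_diff a b js (t @ [(p, col)]) (Suc (length t)) = (\<lambda>x. \<chi> I. node_fun a b js col I x)"
proof -
  have "children (t @ [(p, col)]) (Suc (length t)) = []"
    unfolding children_def by simp
  then show ?thesis
    by (subst node_diff_unfold) (auto simp: dapply_Nil)
qed

lemma Ck_node_diff:
  assumes "\<forall>col I. Ck R (node_fun a b js col I)" and "length t \<le> R" and "1 \<le> i" "i \<le> length t"
  shows "Ck (R + i - length t) (\<lambda>x. node_diff a b js t i x $ I)"
  using assms(3,4)
proof (induction "length t - i" arbitrary: i I rule: less_induct)
  case less
  show ?case unfolding node_diff_component[OF less.prems]
  proof (rule Ck_dapply)
    show "Ck (R + i - length t + length (map (node_diff a b js t) (children t i)))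
        (node_fun a b js (snd (t ! (i - 1))) I)"
      by (rule Ck_mono[of R]) (use assms less.prems length_children_le[of t i] in auto)
  next
    fix v J assume "v \<in> set (map (node_diff a b js t) (children t i))"
    then obtain c where c: "i < c" "c \<le> length t" "v = node_diff a b js t c"
      by (auto simp: mem_children_iff)
    then have "Ck (R + c - length t) (\<lambda>x. node_diff a b js t c x $ J)"
      using less.prems by (intro less.hyps) auto
    then show "Ck (R + i - length t) (\<lambda>x. v x $ J)" using c assms(2) by (auto elim!: Ck_mono)
  qed
qed

lemma pdifferentiable_node_diff:
  assumes "\<forall>col I. Ck R (node_fun a b js col I)" and "length t \<le> R" and "2 \<le> c" "c \<le> length t"
  shows "pdifferentiable k (\<lambda>y. node_diff a b js t c y $ J) z"
  using Ck_node_diff[OF assms(1,2), of c J] assms(2-4) by (intro Ck_imp_pdifferentiable) auto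

inductive desc :: "ltree \<Rightarrow> nat \<Rightarrow> nat \<Rightarrow> bool" for t where
  desc_refl: "desc t i i"
| desc_step: "c \<in> set (children t i) \<Longrightarrow> desc t c p \<Longrightarrow> desc t i p"

lemma desc_imp_le: "desc t i p \<Longrightarrow> p = i \<or> (i < p \<and> p \<le> length t)"
  by (induction rule: desc.induct) (auto simp: mem_children_iff)

lemma desc_iff: "desc t i p \<longleftrightarrow> p = i \<or> (\<exists>c\<in>set (children t i). desc t c p)"
  by (auto intro: desc.intros elim: desc.cases)

lemma desc_trans: "desc t i c \<Longrightarrow> desc t c p \<Longrightarrow> desc t i p"
  by (induction rule: desc.induct) (auto intro: desc.intros)

lemma desc_father: "desc t c p \<Longrightarrow> p \<noteq> c \<Longrightarrow> \<exists>q. p \<in> set (children t q) \<and> desc t c q"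
  by (induction rule: desc.induct) (auto intro: desc.intros)

lemma children_father_unique: "p \<in> set (children t q) \<Longrightarrow> p \<in> set (children t q') \<Longrightarrow> q = q'"
  by (auto simp: mem_children_iff)

lemma desc_ancestors_comparable: "desc t c p \<Longrightarrow> desc t c' p \<Longrightarrow> c \<le> c' \<Longrightarrow> desc t c c'"
proof (induction p rule: less_induct)
  case (less p)
  show ?case
  proof (cases "p = c'")
    case False
    have "p \<noteq> c" using False less.prems desc_imp_le[OF less.prems(2)] by auto
    obtain q where q: "p \<in> set (children t q)" "desc t c q"
      using desc_father[OF less.prems(1) \<open>p \<noteq> c\<close>] by blast
    obtain q' where q': "p \<in> set (children t q')" "desc t c' q'"
      using desc_father[OF less.prems(2) False] by blast
    have "q = q'" "q < p" using q q' children_father_unique by (auto simp: mem_children_iff)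
    then show ?thesis using less.IH[of q] q q' less.prems(3) by blast
  qed (use less.prems(1) in simp)
qed

lemma desc_children_disjoint:
  assumes "c \<in> set (children t i)" "c' \<in> set (children t i)" "c \<noteq> c'" "desc t c p" "desc t c' p"
  shows False
proof -
  have False if h: "c \<in> set (children t i)" "c' \<in> set (children t i)" "c < c'" "desc t c p" "desc t c' p"
    for c c'
  proof -
    obtain q where "c' \<in> set (children t q)" "desc t c q"
      using desc_ancestors_comparable[OF h(4,5)] h(3) desc_father by (metis less_imp_le less_irrefl)
    then have "desc t c i" using h(2) children_father_unique by blast
    then show False using desc_imp_le[of t c i] h(1) by (auto simp: mem_children_iff)
  qed
  then show False using assms by (cases "c < c'") (auto simp: neq_iff)
qed

lemma finite_desc: "finite {p. desc t i p}"
  by (rule finite_subset[of _ "insert i {..length t}"]) (auto dest: desc_imp_le)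

lemma sum_desc_children:
  "(\<Sum>p\<in>{p. desc t i p}. X p) = X i + (\<Sum>q<length (children t i). \<Sum>p\<in>{p. desc t (children t i ! q) p}. X p)"
proof -
  let ?cs = "children t i" and ?P = "\<lambda>c. {p. desc t c p}"
  have "{p. desc t i p} = insert i (\<Union>c\<in>set ?cs. ?P c)"
    by (auto simp: desc_iff[of t i])
  moreover have "i \<notin> (\<Union>c\<in>set ?cs. ?P c)"
    by (auto simp: mem_children_iff dest: desc_imp_le)
  moreover have "\<forall>c\<in>set ?cs. \<forall>c'\<in>set ?cs. c \<noteq> c' \<longrightarrow> ?P c \<inter> ?P c' = {}"
    using desc_children_disjoint by blast
  ultimately have "(\<Sum>p\<in>{p. desc t i p}. X p) = X i + (\<Sum>c\<in>set ?cs. \<Sum>p\<in>?P c. X p)"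
    by (simp add: sum.UNION_disjoint finite_desc)
  also have "(\<Sum>c\<in>set ?cs. \<Sum>p\<in>?P c. X p) = (\<Sum>q<length ?cs. \<Sum>p\<in>?P (?cs ! q). X p)"
    by (simp add: sum.distinct_set_conv_list[OF distinct_children] sum_list_sum_nth atLeast0LessThan)
  finally show ?thesis .
qed

lemma Fnode_append_not_desc:
  assumes "1 \<le> c" "c \<le> length t" "\<not> desc t c p"
  shows "Fnode n a b js (t @ [(p, col)]) c = Fnode n a b js t c"
  using assms
proof (induction n arbitrary: c)
  case (Suc n)
  have "p \<noteq> c" using Suc.prems(3) desc_refl by auto
  then have ch: "children (t @ [(p, col)]) c = children t c"
    using children_append[OF Suc.prems(2)] by simp
  have "c - 1 < length t" using Suc.prems by simp
  then have nth: "(t @ [(p, col)]) ! (c - 1) = t ! (c - 1)"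
    by (simp add: nth_append)
  have eq: "map (Fnode n a b js (t @ [(p, col)])) (children t c) = map (Fnode n a b js t) (children t c)"
    using Suc.prems by (intro map_cong refl Suc.IH) (auto simp: mem_children_iff intro: desc_step)
  show ?case unfolding Fnode.simps(2) ch nth eq ..
qed simp

lemma node_diff_append_not_desc:
  assumes "2 \<le> c" "c \<le> length t" "\<not> desc t c p"
  shows "node_diff a b js (t @ [(p, col)]) c = node_diff a b js t c"
proof -
  have "node_diff a b js (t @ [(p, col)]) c = Fnode (length t) a b js (t @ [(p, col)]) c"
    unfolding node_diff_def using assms by (intro Fnode_fuel_cong) auto
  also have "\<dots> = node_diff a b js t c" unfolding node_diff_def using assms by (intro Fnode_append_not_desc) auto
  finally show ?thesis .
qed

lemma map_node_diff_append_self: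
  assumes "1 \<le> i" "i \<le> length t"
  shows "map (node_diff a b js (t @ [(i, col)])) (children (t @ [(i, col)]) i) =
    map (node_diff a b js t) (children t i) @ [\<lambda>x. \<chi> I. node_fun a b js col I x]"
proof -
  have "map (node_diff a b js (t @ [(i, col)])) (children t i) = map (node_diff a b js t) (children t i)"
    using assms by (intro map_cong refl node_diff_append_not_desc) (auto simp: mem_children_iff dest: desc_imp_le)
  then show ?thesis using assms by (simp add: children_append node_diff_new_leaf)
qed

lemma map_node_diff_append_desc:
  assumes "1 \<le> i" "i \<le> length t" "q < length (children t i)" "desc t (children t i ! q) p"
  shows "map (node_diff a b js (t @ [(p, col)])) (children (t @ [(p, col)]) i) =
    (map (node_diff a b js t) (children t i))[q := node_diff a b js (t @ [(p, col)]) (children t i ! q)]"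
proof -
  let ?cs = "children t i"
  have c: "?cs ! q \<in> set ?cs" using assms(3) by simp
  then have "p \<noteq> i" using assms(4) by (auto simp: mem_children_iff dest: desc_imp_le)
  then have "children (t @ [(p, col)]) i = ?cs" using children_append[OF assms(2)] by simp
  moreover have "node_diff a b js (t @ [(p, col)]) (?cs ! q') = node_diff a b js t (?cs ! q')"
    if "q' < length ?cs" "q' \<noteq> q" for q'
  proof (rule node_diff_append_not_desc)
    show "\<not> desc t (?cs ! q') p"
      using desc_children_disjoint[of "?cs ! q'" t i "?cs ! q" p] that assms(3,4) distinct_children
      by (auto simp: nth_eq_iff_index_eq)
  qed (use that assms(1) nth_mem[OF that(1)] in \<open>auto simp: mem_children_iff\<close>)
  ultimately show ?thesis
    using assms(3) by (intro nth_equalityI) (auto simp: nth_list_update)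
qed

lemma lie_deriv_dapply_node_diffs:
  fixes g :: "real^'d::finite \<Rightarrow> real^'d" and b :: "real^'d \<Rightarrow> real^'m::finite^'d"
  assumes i: "1 \<le> i" "i \<le> length t"
    and h: "Ck (Suc (length (children t i))) h"
    and pv: "\<And>c J y k. c \<in> set (children t i) \<Longrightarrow> pdifferentiable k (\<lambda>y. node_diff a b js t c y $ J) y"
    and IH: "\<And>c. c \<in> set (children t i) \<Longrightarrow>
      lie_deriv_vec g (node_diff a b js t c) = (\<lambda>x. \<Sum>p\<in>{p. desc t c p}. node_diff a b js (t @ [(p, col)]) c x)"
    and col: "\<And>I. node_fun a b js col I = (\<lambda>y. g y $ I)"
  shows "lie_deriv g (dapply h (map (node_diff a b js t) (children t i))) x =
    (\<Sum>p\<in>{p. desc t i p}. dapply h (map (node_diff a b js (t @ [(p, col)])) (children (t @ [(p, col)]) i)) x)"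
proof -
  let ?cs = "children t i" and ?F = "\<lambda>p. node_diff a b js (t @ [(p, col)])"
  let ?vs = "map (node_diff a b js t) ?cs"
  define X where "X p = dapply h (map (?F p) (children (t @ [(p, col)]) i)) x" for p
  have "lie_deriv g (dapply h ?vs) x =
      dapply h (?vs @ [g]) x + (\<Sum>q<length ?vs. dapply h (?vs[q := lie_deriv_vec g (?vs ! q)]) x)"
    using h pv by (intro lie_deriv_dapply) auto
  also have "dapply h (?vs @ [g]) x = X i"
    using map_node_diff_append_self[OF i, of a b js col] unfolding X_def col by simp
  also have "(\<Sum>q<length ?vs. dapply h (?vs[q := lie_deriv_vec g (?vs ! q)]) x)
      = (\<Sum>q<length ?cs. \<Sum>p\<in>{p. desc t (?cs ! q) p}. X p)"
  proof (rule sum.cong)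
    fix q assume "q \<in> {..<length ?cs}"
    then have q: "q < length ?cs" by simp
    have "dapply h (?vs[q := lie_deriv_vec g (?vs ! q)]) x
        = (\<Sum>p\<in>{p. desc t (?cs ! q) p}. dapply h (?vs[q := ?F p (?cs ! q)]) x)"
      using IH[of "?cs ! q"] q by (simp add: dapply_update_sum finite_desc)
    also have "\<dots> = (\<Sum>p\<in>{p. desc t (?cs ! q) p}. X p)"
      by (rule sum.cong[OF refl]) (simp add: X_def map_node_diff_append_desc[OF i q])
    finally show "dapply h (?vs[q := lie_deriv_vec g (?vs ! q)]) x = (\<Sum>p\<in>{p. desc t (?cs ! q) p}. X p)" .
  qed simp
  also have "X i + (\<Sum>q<length ?cs. \<Sum>p\<in>{p. desc t (?cs ! q) p}. X p) = (\<Sum>p\<in>{p. desc t i p}. X p)"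
    by (rule sum_desc_children[symmetric])
  finally show ?thesis unfolding X_def .
qed

lemma lie_deriv_node_diff:
  fixes g :: "real^'d::finite \<Rightarrow> real^'d" and b :: "real^'d \<Rightarrow> real^'m::finite^'d"
  assumes NF: "\<forall>col I. Ck R (node_fun a b js col I)" and L: "length t \<le> R"
    and col: "\<And>I. node_fun a b js col I = (\<lambda>y. g y $ I)"
    and i: "2 \<le> i" "i \<le> length t"
  shows "lie_deriv_vec g (node_diff a b js t i) = (\<lambda>x. \<Sum>p\<in>{p. desc t i p}. node_diff a b js (t @ [(p, col)]) i x)"
  using i
proof (induction "length t - i" arbitrary: i rule: less_induct)
  case less
  have i1: "1 \<le> i" using less.prems by simp
  have i_less: "i - 1 < length t" using less.prems by simp
  show ?case
  proof (intro ext iffD2[OF vec_eq_iff] allI)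
    fix x I
    have "lie_deriv_vec g (node_diff a b js t i) x $ I =
        lie_deriv g (dapply (node_fun a b js (snd (t ! (i - 1))) I) (map (node_diff a b js t) (children t i))) x"
      unfolding lie_deriv_vec_def node_diff_component[OF i1 less.prems(2), symmetric] by simp
    also have "\<dots> = (\<Sum>p\<in>{p. desc t i p}. dapply (node_fun a b js (snd (t ! (i - 1))) I)
         (map (node_diff a b js (t @ [(p, col)])) (children (t @ [(p, col)]) i)) x)"
    proof (rule lie_deriv_dapply_node_diffs[OF i1 less.prems(2) _ _ _ col])
      show "Ck (Suc (length (children t i))) (node_fun a b js (snd (t ! (i - 1))) I)"
        by (rule Ck_mono[of R]) (use NF L length_children_le[of t i] less.prems in auto)
    next
      fix c J y k assume "c \<in> set (children t i)"
      then show "pdifferentiable k (\<lambda>y. node_diff a b js t c y $ J) y"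
        using less.prems by (intro pdifferentiable_node_diff[OF NF L]) (auto simp: mem_children_iff)
    next
      fix c assume "c \<in> set (children t i)"
      then show "lie_deriv_vec g (node_diff a b js t c) =
          (\<lambda>x. \<Sum>p\<in>{p. desc t c p}. node_diff a b js (t @ [(p, col)]) c x)"
        using less.prems by (intro less.hyps) (auto simp: mem_children_iff)
    qed
    also have "\<dots> = (\<Sum>p\<in>{p. desc t i p}. node_diff a b js (t @ [(p, col)]) i x) $ I"
      using less.prems i_less by (simp add: node_diff_unfold nth_append)
    finally show "lie_deriv_vec g (node_diff a b js t i) x $ I =
        (\<Sum>p\<in>{p. desc t i p}. node_diff a b js (t @ [(p, col)]) i x) $ I" .
  qed
qed


definition monotone_labelled :: "ltree \<Rightarrow> bool" where
  "monotone_labelled t \<longleftrightarrow> t \<noteq> [] \<and> (\<forall>c\<in>{2..length t}. 1 \<le> fst (t ! (c - 1)) \<and> fst (t ! (c - 1)) < c)"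

lemma monotone_labelled_append:
  assumes "monotone_labelled t" "1 \<le> p" "p \<le> length t"
  shows "monotone_labelled (t @ [(p, col)])"
proof -
  have "1 \<le> fst ((t @ [(p, col)]) ! (c - 1)) \<and> fst ((t @ [(p, col)]) ! (c - 1)) < c"
    if c: "c \<in> {2..length (t @ [(p, col)])}" for c
  proof (cases "c \<le> length t")
    case True
    then have "c - 1 < length t" using c by auto
    then show ?thesis using assms(1) True c unfolding monotone_labelled_def by (auto simp: nth_append)
  next
    case False
    then have "c = Suc (length t)" using c by simp
    then show ?thesis using assms(2,3) by (simp add: nth_append)
  qed
  then show ?thesis unfolding monotone_labelled_def by simp
qed

lemma desc_root:
  assumes "monotone_labelled t"
  shows "{p. desc t 1 p} = {1..length t}"
proof -
  have "desc t 1 c" if "1 \<le> c" "c \<le> length t" for c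
    using that
  proof (induction c rule: less_induct)
    case (less c)
    show ?case
    proof (cases "c = 1")
      case False
      define q where "q = fst (t ! (c - 1))"
      have q: "1 \<le> q" "q < c"
        using assms less.prems False unfolding monotone_labelled_def q_def by auto
      then have "desc t q c"
        using less.prems by (auto simp: mem_children_iff q_def intro: desc.intros)
      moreover have "desc t 1 q" using q less by auto
      ultimately show ?thesis using desc_trans by blast
    qed (simp add: desc_refl)
  qed
  moreover have "1 \<le> length t" using assms unfolding monotone_labelled_def by (cases t) auto
  ultimately show ?thesis using desc_imp_le[of t 1] by fastforce
qed

lemma lie_deriv_elemF:
  fixes g :: "real^'d::finite \<Rightarrow> real^'d" and b :: "real^'d \<Rightarrow> real^'m::finite^'d"
  assumes NF: "\<forall>col I. Ck R (node_fun a b js col I)" and L: "length t \<le> R"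
    and col: "\<And>I. node_fun a b js col I = (\<lambda>y. g y $ I)"
    and f: "Ck R f" and t: "monotone_labelled t"
  shows "lie_deriv g (elemF f a b js t) x = (\<Sum>p\<in>{1..length t}. elemF f a b js (t @ [(p, col)]) x)"
proof -
  have L1: "1 \<le> length t" using t unfolding monotone_labelled_def by (cases t) auto
  have "lie_deriv g (dapply f (map (node_diff a b js t) (children t 1))) x =
      (\<Sum>p\<in>{p. desc t 1 p}. dapply f (map (node_diff a b js (t @ [(p, col)])) (children (t @ [(p, col)]) 1)) x)"
  proof (rule lie_deriv_dapply_node_diffs[OF _ L1 _ _ _ col])
    show "Ck (Suc (length (children t 1))) f"
      by (rule Ck_mono[OF f]) (use L L1 length_children_le[of t 1] in auto)
  next
    fix c J y k assume "c \<in> set (children t 1)"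
    then show "pdifferentiable k (\<lambda>y. node_diff a b js t c y $ J) y"
      by (intro pdifferentiable_node_diff[OF NF L]) (auto simp: mem_children_iff)
  next
    fix c assume "c \<in> set (children t 1)"
    then show "lie_deriv_vec g (node_diff a b js t c) =
        (\<lambda>x. \<Sum>p\<in>{p. desc t c p}. node_diff a b js (t @ [(p, col)]) c x)"
      by (intro lie_deriv_node_diff[OF NF L col]) (auto simp: mem_children_iff)
  qed simp
  then show ?thesis unfolding desc_root[OF t] elemF_node_diff by simp
qed

lemma Ck_elemF:
  assumes "\<forall>col I. Ck R (node_fun a b js col I)" and "length t \<le> R" and "Ck R f" and "1 \<le> length t"
  shows "Ck (R + 1 - length t) (elemF f a b js t)"
  unfolding elemF_node_diff
proof (rule Ck_dapply)
  show "Ck (R + 1 - length t + length (map (node_diff a b js t) (children t 1))) f"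
    by (rule Ck_mono[OF assms(3)]) (use assms(2,4) length_children_le[of t 1] in auto)
next
  fix v J assume "v \<in> set (map (node_diff a b js t) (children t 1))"
  then obtain c where c: "1 < c" "c \<le> length t" "v = node_diff a b js t c"
    by (auto simp: mem_children_iff)
  then have "Ck (R + c - length t) (\<lambda>x. node_diff a b js t c x $ J)"
    by (intro Ck_node_diff[OF assms(1,2)]) auto
  then show "Ck (R + 1 - length t) (\<lambda>x. v x $ J)" using c assms(2) by (auto elim!: Ck_mono)
qed

lemma Fnode_cong_indices:
  assumes "\<And>i I. 1 \<le> i \<Longrightarrow> i \<le> length t \<Longrightarrow>
      node_fun a b js (snd (t ! (i - 1))) I = node_fun a b js' (snd (t ! (i - 1))) I"
  shows "1 \<le> i \<Longrightarrow> i \<le> length t \<Longrightarrow> Fnode n a b js t i = Fnode n a b js' t i"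
proof (induction n arbitrary: i)
  case (Suc n)
  have eq: "map (Fnode n a b js t) (children t i) = map (Fnode n a b js' t) (children t i)"
    using Suc by (intro map_cong refl Suc.IH) (auto simp: mem_children_iff)
  have nf: "node_fun a b js (snd (t ! (i - 1))) = node_fun a b js' (snd (t ! (i - 1)))"
    using assms Suc.prems by auto
  show ?case unfolding Fnode.simps(2) eq nf ..
qed simp

lemma elemF_cong_indices:
  assumes "\<And>i I. 1 \<le> i \<Longrightarrow> i \<le> length t \<Longrightarrow>
      node_fun a b js (snd (t ! (i - 1))) I = node_fun a b js' (snd (t ! (i - 1))) I"
  shows "elemF f a b js t = elemF f a b js' t"
proof -
  have eq: "map (Fnode (length t) a b js t) (children t 1) = map (Fnode (length t) a b js' t) (children t 1)"
    by (intro map_cong refl Fnode_cong_indices[OF assms]) (auto simp: mem_children_iff)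
  show ?thesis unfolding elemF_def eq ..
qed


section \<open>The generator in Hoermander form\<close>

definition bcol :: "(real^'d::finite \<Rightarrow> real^'m::finite^'d) \<Rightarrow> 'm \<Rightarrow> real^'d \<Rightarrow> real^'d" where
  "bcol b j = (\<lambda>y. \<chi> I. b y $ I $ j)"

lemma lie_deriv_bcol_twice:
  fixes u :: "real^'d::finite \<Rightarrow> real" and b :: "real^'d \<Rightarrow> real^'m::finite^'d"
  assumes u: "Ck 2 u" and b: "\<And>I j. Ck 1 (\<lambda>y. b y $ I $ j)"
  shows "lie_deriv (bcol b j) (lie_deriv (bcol b j) u) x =
     (\<Sum>k\<in>UNIV. \<Sum>l\<in>UNIV. b x $ k $ j * pd k (\<lambda>y. b y $ l $ j) x * pd l u x)
   + (\<Sum>k\<in>UNIV. \<Sum>l\<in>UNIV. b x $ k $ j * b x $ l $ j * pd k (pd l u) x)"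
proof -
  have "pdifferentiable k (pd l u) z" "pdifferentiable k (\<lambda>y. b y $ l $ j) z" for k l z
    using u b[of l j] by (auto simp: numeral_2_eq_2 Ck_Suc)
  then have "pd k (\<lambda>y. \<Sum>l\<in>UNIV. b y $ l $ j * pd l u y) x =
      (\<Sum>l\<in>UNIV. pd k (\<lambda>y. b y $ l $ j) x * pd l u x + b x $ l $ j * pd k (pd l u) x)" for k
    by (simp add: pd_sum pdifferentiable_mult pd_mult)
  moreover have "lie_deriv (bcol b j) u = (\<lambda>y. \<Sum>l\<in>UNIV. b y $ l $ j * pd l u y)"
    unfolding lie_deriv_def bcol_def by (rule ext) simp
  ultimately show ?thesis unfolding lie_deriv_def bcol_def
    by (simp add: sum_distrib_left sum.distrib algebra_simps)
qed

text \<open>The correction term in atil is exactly the first-order part of D_{b_j}^2.\<close>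
lemma L0_eq_lie_derivs:
  fixes u :: "real^'d::finite \<Rightarrow> real" and b :: "real^'d \<Rightarrow> real^'m::finite^'d"
  assumes u: "Ck 2 u" and b: "\<And>I j. Ck 1 (\<lambda>y. b y $ I $ j)"
  shows "L0 a b u x = lie_deriv a u x + 1/2 * (\<Sum>j\<in>UNIV. lie_deriv (bcol b j) (lie_deriv (bcol b j) u) x)"
proof -
  define C where "C = (\<Sum>j\<in>UNIV. \<Sum>k\<in>UNIV. \<Sum>l\<in>UNIV. b x $ k $ j * pd k (\<lambda>y. b y $ l $ j) x * pd l u x)"
  define Q where "Q = (\<Sum>j\<in>UNIV. \<Sum>k\<in>UNIV. \<Sum>l\<in>UNIV. b x $ k $ j * b x $ l $ j * pd k (pd l u) x)"
  have C: "(\<Sum>l\<in>UNIV. (\<Sum>k\<in>UNIV. \<Sum>j\<in>UNIV. b x $ k $ j * pd k (\<lambda>y. b y $ l $ j) x) * pd l u x) = C"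
  proof -
    have "(\<Sum>l\<in>UNIV. (\<Sum>k\<in>UNIV. \<Sum>j\<in>UNIV. b x $ k $ j * pd k (\<lambda>y. b y $ l $ j) x) * pd l u x)
        = (\<Sum>l\<in>UNIV. \<Sum>k\<in>UNIV. \<Sum>j\<in>UNIV. b x $ k $ j * pd k (\<lambda>y. b y $ l $ j) x * pd l u x)"
      by (simp add: sum_distrib_right)
    also have "\<dots> = (\<Sum>k\<in>UNIV. \<Sum>l\<in>UNIV. \<Sum>j\<in>UNIV. b x $ k $ j * pd k (\<lambda>y. b y $ l $ j) x * pd l u x)"
      by (rule sum.swap)
    also have "\<dots> = (\<Sum>k\<in>UNIV. \<Sum>j\<in>UNIV. \<Sum>l\<in>UNIV. b x $ k $ j * pd k (\<lambda>y. b y $ l $ j) x * pd l u x)"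
      by (intro sum.cong refl sum.swap)
    also have "\<dots> = C" unfolding C_def by (rule sum.swap)
    finally show ?thesis .
  qed
  have Q: "(\<Sum>k\<in>UNIV. \<Sum>l\<in>UNIV. \<Sum>j\<in>UNIV. b x $ k $ j * b x $ l $ j * pd k (pd l u) x) = Q"
  proof -
    have "(\<Sum>k\<in>UNIV. \<Sum>l\<in>UNIV. \<Sum>j\<in>UNIV. b x $ k $ j * b x $ l $ j * pd k (pd l u) x)
        = (\<Sum>k\<in>UNIV. \<Sum>j\<in>UNIV. \<Sum>l\<in>UNIV. b x $ k $ j * b x $ l $ j * pd k (pd l u) x)"
      by (intro sum.cong refl sum.swap)
    also have "\<dots> = Q" unfolding Q_def by (rule sum.swap)
    finally show ?thesis .
  qed
  have "L0 a b u x = lie_deriv a u x + 1/2 * C + 1/2 * Q"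
    unfolding L0_def atil_def lie_deriv_def C[symmetric] Q[symmetric]
    by (simp add: sum.distrib sum_distrib_left algebra_simps)
  then show ?thesis
    unfolding lie_deriv_bcol_twice[OF u b] C_def Q_def by (simp add: sum.distrib algebra_simps)
qed

section \<open>Enumerating the trees of a given order\<close>

lemma s_nodes_append_Det: "s_nodes (t @ [(p, Det)]) = s_nodes t"
  unfolding s_nodes_def by simp

lemma rho_append_Det: "rho (t @ [(p, Det)]) = Suc (rho t)"
  unfolding rho_def s_nodes_def d_nodes_def by simp

definition add_sto_pair :: "ltree \<Rightarrow> nat \<Rightarrow> nat \<Rightarrow> ltree" where
  "add_sto_pair t p q = t @ [(p, Sto (s_nodes t div 2 + 1)), (q, Sto (s_nodes t div 2 + 1))]"

lemma s_nodes_add_sto_pair: "s_nodes (add_sto_pair t p q) = s_nodes t + 2"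
  unfolding add_sto_pair_def s_nodes_def by simp

lemma rho_add_sto_pair: "rho (add_sto_pair t p q) = Suc (rho t)"
  unfolding rho_def s_nodes_add_sto_pair by (simp add: add_sto_pair_def d_nodes_def)

lemma LTS_add_sto_pair:
  "t \<in> LTS \<Longrightarrow> 1 \<le> p \<Longrightarrow> p \<le> length t \<Longrightarrow> 1 \<le> q \<Longrightarrow> q \<le> length t + 1 \<Longrightarrow> add_sto_pair t p q \<in> LTS"
  unfolding add_sto_pair_def by (rule LTS.sto)

lemma LTS_cases [consumes 1, case_names base det sto]:
  assumes "t \<in> LTS"
  obtains "t = [(0, Root)]"
  | t' p where "t = t' @ [(p, Det)]" "t' \<in> LTS" "1 \<le> p" "p \<le> length t'"
  | t' p q where "t = add_sto_pair t' p q" "t' \<in> LTS" "1 \<le> p" "p \<le> length t'" "1 \<le> q" "q \<le> length t' + 1"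
  using assms by (cases rule: LTS.cases) (auto simp: add_sto_pair_def)

definition sto_labels_bounded :: "ltree \<Rightarrow> bool" where
  "sto_labels_bounded t \<longleftrightarrow> (\<forall>p k. (p, Sto k) \<in> set t \<longrightarrow> 1 \<le> k \<and> k \<le> s_nodes t div 2)"

lemma LTS_invariants:
  "t \<in> LTS \<Longrightarrow> monotone_labelled t \<and> length t = 1 + d_nodes t + s_nodes t \<and> even (s_nodes t)
    \<and> sto_labels_bounded t"
proof (induction rule: LTS.induct)
  case base
  then show ?case unfolding monotone_labelled_def sto_labels_bounded_def s_nodes_def d_nodes_def by auto
next
  case (det t p)
  then show ?case
    by (auto simp: monotone_labelled_append sto_labels_bounded_def s_nodes_def d_nodes_def)
next
  case (sto t p q)
  have "monotone_labelled (add_sto_pair t p q)"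
    using monotone_labelled_append[OF monotone_labelled_append[OF _ sto.hyps(2,3)] sto.hyps(4)] sto
    by (simp add: add_sto_pair_def)
  moreover have "sto_labels_bounded (add_sto_pair t p q)"
    using sto.IH unfolding sto_labels_bounded_def s_nodes_add_sto_pair
    by (auto simp: add_sto_pair_def le_Suc_eq)
  ultimately show ?case
    using sto.IH s_nodes_add_sto_pair[of t p q] by (simp add: add_sto_pair_def d_nodes_def)
qed

lemma LTS_length_le: "t \<in> LTS \<Longrightarrow> length t \<le> 1 + 2 * rho t"
  using LTS_invariants[of t] unfolding rho_def by auto

definition trees_of_order :: "nat \<Rightarrow> ltree set" where
  "trees_of_order m = {t \<in> LTS. rho t = m}"

lemma trees_of_order_0: "trees_of_order 0 = {[(0, Root)]}"
proof -
  have "t = [(0, Root)]" if "t \<in> LTS" "rho t = 0" for t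
    using that by (cases rule: LTS_cases) (auto simp: rho_append_Det rho_add_sto_pair)
  then show ?thesis unfolding trees_of_order_def by (auto intro: LTS.base simp: rho_def s_nodes_def d_nodes_def)
qed

lemma trees_of_order_Suc: "trees_of_order (Suc m) =
    (\<lambda>(t, p). t @ [(p, Det)]) ` (SIGMA t:trees_of_order m. {1..length t}) \<union>
    (\<lambda>(t, p, q). add_sto_pair t p q) ` (SIGMA t:trees_of_order m. {1..length t} \<times> {1..Suc (length t)})"
    (is "_ = ?D \<union> ?S")
proof
  show "trees_of_order (Suc m) \<subseteq> ?D \<union> ?S"
  proof
    fix t' assume "t' \<in> trees_of_order (Suc m)"
    then have t': "t' \<in> LTS" "rho t' = Suc m" unfolding trees_of_order_def by auto
    then show "t' \<in> ?D \<union> ?S"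
    proof (cases rule: LTS_cases)
      case base then show ?thesis using t' by (simp add: rho_def s_nodes_def d_nodes_def)
    next
      case (det t p)
      then show ?thesis using t' rho_append_Det
        by (intro UnI1 image_eqI[where x="(t, p)"]) (auto simp: trees_of_order_def)
    next
      case (sto t p q)
      then show ?thesis using t' rho_add_sto_pair[of t p q]
        by (intro UnI2 image_eqI[where x="(t, p, q)"]) (auto simp: trees_of_order_def)
    qed
  qed
  show "?D \<union> ?S \<subseteq> trees_of_order (Suc m)"
  proof (intro Un_least image_subsetI)
    fix x assume "x \<in> (SIGMA t:trees_of_order m. {1..length t})"
    then show "(\<lambda>(t, p). t @ [(p, Det)]) x \<in> trees_of_order (Suc m)"
      by (auto simp: trees_of_order_def rho_append_Det intro: LTS.det)
  next
    fix x assume "x \<in> (SIGMA t:trees_of_order m. {1..length t} \<times> {1..Suc (length t)})"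
    then show "(\<lambda>(t, p, q). add_sto_pair t p q) x \<in> trees_of_order (Suc m)"
      by (auto simp: trees_of_order_def rho_add_sto_pair intro: LTS_add_sto_pair)
  qed
qed

lemma finite_trees_of_order: "finite (trees_of_order m)"
  by (induction m) (auto simp: trees_of_order_0 trees_of_order_Suc)

lemma sum_trees_of_order_Suc:
  "(\<Sum>t\<in>trees_of_order (Suc m). W t) = (\<Sum>t\<in>trees_of_order m.
     (\<Sum>p=1..length t. W (t @ [(p, Det)])) + (\<Sum>p=1..length t. \<Sum>q=1..Suc (length t). W (add_sto_pair t p q)))"
proof -
  let ?D = "(\<lambda>(t, p). t @ [(p, Det)]) ` (SIGMA t:trees_of_order m. {1..length t})"
  let ?S = "(\<lambda>(t, p, q). add_sto_pair t p q) ` (SIGMA t:trees_of_order m. {1..length t} \<times> {1..Suc (length t)})"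
  have inj_D: "inj_on (\<lambda>(t, p). t @ [(p, Det)]) A" for A
    by (auto simp: inj_on_def)
  have inj_S: "inj_on (\<lambda>(t, p, q). add_sto_pair t p q) A" for A
    by (auto simp: inj_on_def add_sto_pair_def)
  have "?D \<inter> ?S = {}" by (auto simp: add_sto_pair_def)
  then have "(\<Sum>t\<in>trees_of_order (Suc m). W t) = (\<Sum>t\<in>?D. W t) + (\<Sum>t\<in>?S. W t)"
    unfolding trees_of_order_Suc using finite_trees_of_order[of m]
    by (intro sum.union_disjoint) auto
  also have "(\<Sum>t\<in>?D. W t) = (\<Sum>(t, p)\<in>(SIGMA t:trees_of_order m. {1..length t}). W (t @ [(p, Det)]))"
    by (subst sum.reindex[OF inj_D]) (simp add: case_prod_unfold)
  also have "\<dots> = (\<Sum>t\<in>trees_of_order m. \<Sum>p=1..length t. W (t @ [(p, Det)]))"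
    by (rule sum.Sigma[symmetric]) (auto simp: finite_trees_of_order)
  also have "(\<Sum>t\<in>?S. W t) =
      (\<Sum>(t, pq)\<in>(SIGMA t:trees_of_order m. {1..length t} \<times> {1..Suc (length t)}). W (add_sto_pair t (fst pq) (snd pq)))"
    by (subst sum.reindex[OF inj_S]) (simp add: case_prod_unfold)
  also have "\<dots> = (\<Sum>t\<in>trees_of_order m. \<Sum>pq\<in>{1..length t} \<times> {1..Suc (length t)}. W (add_sto_pair t (fst pq) (snd pq)))"
    by (rule sum.Sigma[symmetric]) (auto simp: finite_trees_of_order)
  also have "\<dots> = (\<Sum>t\<in>trees_of_order m. \<Sum>p=1..length t. \<Sum>q=1..Suc (length t). W (add_sto_pair t p q))"
    by (simp only: sum.cartesian_product case_prod_unfold)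
  finally show ?thesis by (simp add: sum.distrib)
qed


lemma elemF_snoc_index:
  assumes "sto_labels_bounded t" "length js = s_nodes t div 2"
  shows "elemF f a b (js @ [j]) t = elemF f a b js t"
proof (rule elemF_cong_indices)
  fix i I assume i: "1 \<le> i" "i \<le> length t"
  show "node_fun a b (js @ [j]) (snd (t ! (i - 1))) I = node_fun a b js (snd (t ! (i - 1))) I"
  proof (cases "snd (t ! (i - 1))")
    case (Sto k)
    have "(fst (t ! (i - 1)), Sto k) \<in> set t"
      using i Sto by (metis nth_mem prod.collapse diff_less less_le_trans zero_less_one)
    then have "k - 1 < length js" using assms unfolding sto_labels_bounded_def by fastforce
    then show ?thesis using Sto by (simp add: nth_append)
  qed auto
qed

definition tree_term :: "(real^'d::finite \<Rightarrow> real) \<Rightarrow> (real^'d \<Rightarrow> real^'d) \<Rightarrow> (real^'d \<Rightarrow> real^'m::finite^'d)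
    \<Rightarrow> ltree \<Rightarrow> real^'d \<Rightarrow> real" where
  "tree_term f a b t x = (\<Sum>js \<in> {js::'m list. length js = s_nodes t div 2}.
      elemF f a b js t x / 2 ^ (s_nodes t div 2))"

lemma tree_term_altdef: "tree_term f a b t = (\<lambda>x. (\<Sum>js \<in> {js::'m::finite list. length js = s_nodes t div 2}.
      elemF f a b js t x) / 2 ^ (s_nodes t div 2))"
  unfolding tree_term_def by (simp add: sum_divide_distrib)

lemma tree_term_root: "tree_term f a b [(0, Root)] x = f x"
proof -
  have "{js. length js = 0} = {[]}" "children [(0, Root)] 1 = []" by (auto simp: children_def)
  then show ?thesis by (simp add: tree_term_def elemF_def s_nodes_def dapply_Nil)
qed

locale smooth_coefficients =
  fixes n :: nat and f :: "real^'d::finite \<Rightarrow> real" and a :: "real^'d \<Rightarrow> real^'d"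
    and b :: "real^'d \<Rightarrow> real^'m::finite^'d"
  assumes Ck_f: "Ck (2 * n) f" and Ck_a: "\<forall>I. Ck (2 * n) (\<lambda>y. a y $ I)"
    and Ck_b: "\<forall>I j. Ck (2 * n + 1) (\<lambda>y. b y $ I $ j)"
begin

lemma Ck_node_fun: "\<forall>col I. Ck (2 * n) (node_fun a b js col I)"
proof (intro allI)
  fix col I
  show "Ck (2 * n) (node_fun a b js col I)"
  proof (cases col)
    case (Sto k)
    then show ?thesis using Ck_b Ck_mono[of "2 * n + 1" "\<lambda>y. b y $ I $ (js ! (k - 1))" "2 * n"] by simp
  qed (use Ck_a in \<open>auto simp: Ck_const\<close>)
qed

lemma Ck_b_entry: "Ck 1 (\<lambda>y. b y $ I $ j)"
  using Ck_b Ck_mono[of "2 * n + 1" "\<lambda>y. b y $ I $ j" 1] by simp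

lemma Ck_elemF_of_length:
  assumes "monotone_labelled t" "length t \<le> 2 * n" "r \<le> 2 * n + 1 - length t"
  shows "Ck r (elemF f a b js t)"
proof -
  have "1 \<le> length t" using assms(1) unfolding monotone_labelled_def by (cases t) auto
  then have "Ck (2 * n + 1 - length t) (elemF f a b js t)"
    using Ck_elemF[OF Ck_node_fun assms(2) Ck_f] by simp
  then show ?thesis using assms(3) by (rule Ck_mono)
qed

lemma pdifferentiable_elemF:
  "monotone_labelled t \<Longrightarrow> length t \<le> 2 * n \<Longrightarrow> pdifferentiable k (elemF f a b js t) y"
  by (rule Ck_imp_pdifferentiable[OF Ck_elemF_of_length[of t 1]]) auto

lemma Ck_tree_term: "t \<in> LTS \<Longrightarrow> length t < 2 * n \<Longrightarrow> Ck 2 (tree_term f a b t)"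
  unfolding tree_term_altdef using LTS_invariants[of t]
  by (intro Ck_divide Ck_sum finite_lists_length_eq_UNIV Ck_elemF_of_length) auto

lemma lie_deriv_tree_term_Det:
  assumes "t \<in> LTS" "length t < 2 * n"
  shows "lie_deriv a (tree_term f a b t) x = (\<Sum>p=1..length t. tree_term f a b (t @ [(p, Det)]) x)"
proof -
  define J where "J = {js::'m list. length js = s_nodes t div 2}"
  have t: "monotone_labelled t" using LTS_invariants[OF assms(1)] by simp
  have "lie_deriv a (tree_term f a b t) x = (\<Sum>js\<in>J. lie_deriv a (elemF f a b js t) x) / 2 ^ (s_nodes t div 2)"
    unfolding tree_term_altdef J_def using t assms(2)
    by (intro lie_deriv_sum_divide finite_lists_length_eq_UNIV pdifferentiable_elemF) auto
  also have "\<dots> = (\<Sum>js\<in>J. \<Sum>p=1..length t. elemF f a b js (t @ [(p, Det)]) x) / 2 ^ (s_nodes t div 2)"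
    using assms(2) by (intro arg_cong[where f = "\<lambda>s. s / _"] sum.cong refl lie_deriv_elemF[OF Ck_node_fun _ _ Ck_f t]) auto
  also have "\<dots> = (\<Sum>p=1..length t. (\<Sum>js\<in>J. elemF f a b js (t @ [(p, Det)]) x) / 2 ^ (s_nodes t div 2))"
    by (subst sum.swap) (simp add: sum_divide_distrib)
  also have "\<dots> = (\<Sum>p=1..length t. tree_term f a b (t @ [(p, Det)]) x)"
    by (simp add: tree_term_altdef J_def s_nodes_append_Det)
  finally show ?thesis .
qed

lemma lie_deriv_bcol_tree_term:
  assumes "t \<in> LTS" "length t < 2 * n"
  shows "lie_deriv (bcol b j) (tree_term f a b t) = (\<lambda>x. (\<Sum>js \<in> {js::'m list. length js = s_nodes t div 2}.
     \<Sum>p=1..length t. elemF f a b (js @ [j]) (t @ [(p, Sto (s_nodes t div 2 + 1))]) x) / 2 ^ (s_nodes t div 2))"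
proof
  fix x
  define J where "J = {js::'m list. length js = s_nodes t div 2}"
  have t: "monotone_labelled t" "sto_labels_bounded t" using LTS_invariants[OF assms(1)] by simp_all
  have "lie_deriv (bcol b j) (tree_term f a b t) x =
      (\<Sum>js\<in>J. lie_deriv (bcol b j) (elemF f a b (js @ [j]) t) x) / 2 ^ (s_nodes t div 2)"
    unfolding tree_term_altdef J_def using t assms(2)
    by (simp add: lie_deriv_sum_divide finite_lists_length_eq_UNIV pdifferentiable_elemF elemF_snoc_index)
  also have "\<dots> = (\<Sum>js\<in>J. \<Sum>p=1..length t. elemF f a b (js @ [j]) (t @ [(p, Sto (s_nodes t div 2 + 1))]) x)
      / 2 ^ (s_nodes t div 2)"
    using assms(2) unfolding J_def
    by (intro arg_cong[where f = "\<lambda>s. s / _"] sum.cong refl lie_deriv_elemF[OF Ck_node_fun _ _ Ck_f t(1)])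
      (auto simp: bcol_def nth_append)
  finally show "lie_deriv (bcol b j) (tree_term f a b t) x = (\<Sum>js\<in>J.
     \<Sum>p=1..length t. elemF f a b (js @ [j]) (t @ [(p, Sto (s_nodes t div 2 + 1))]) x) / 2 ^ (s_nodes t div 2)" .
qed


lemma lie_deriv_bcol_twice_tree_term:
  assumes "t \<in> LTS" "length t < 2 * n"
  shows "lie_deriv (bcol b j) (lie_deriv (bcol b j) (tree_term f a b t)) x =
    (\<Sum>js \<in> {js::'m list. length js = s_nodes t div 2}. \<Sum>p=1..length t. \<Sum>q=1..Suc (length t).
       elemF f a b (js @ [j]) (add_sto_pair t p q) x) / 2 ^ (s_nodes t div 2)"
proof -
  define J where "J = {js::'m list. length js = s_nodes t div 2}"
  define K where "K = s_nodes t div 2 + 1"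
  have t: "monotone_labelled t" using LTS_invariants[OF assms(1)] by simp
  have tp: "monotone_labelled (t @ [(p, Sto K)])" "length (t @ [(p, Sto K)]) \<le> 2 * n"
    if "p \<in> {1..length t}" for p
    using monotone_labelled_append[OF t] that assms(2) by auto
  have col: "node_fun a b (js @ [j]) (Sto K) I = (\<lambda>y. bcol b j y $ I)" if "length js = s_nodes t div 2" for js I
    using that by (simp add: K_def bcol_def nth_append)
  have "lie_deriv (bcol b j) (lie_deriv (bcol b j) (tree_term f a b t)) x =
      (\<Sum>js\<in>J. lie_deriv (bcol b j) (\<lambda>y. \<Sum>p=1..length t. elemF f a b (js @ [j]) (t @ [(p, Sto K)]) y) x)
        / 2 ^ (s_nodes t div 2)"
    unfolding lie_deriv_bcol_tree_term[OF assms] J_def[symmetric] K_def[symmetric]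
    by (intro lie_deriv_sum_divide pdifferentiable_sum pdifferentiable_elemF tp)
      (auto simp: J_def finite_lists_length_eq_UNIV)
  also have "\<dots> = (\<Sum>js\<in>J. \<Sum>p=1..length t. lie_deriv (bcol b j) (elemF f a b (js @ [j]) (t @ [(p, Sto K)])) x)
        / 2 ^ (s_nodes t div 2)"
    by (intro arg_cong[where f = "\<lambda>s. s / _"] sum.cong refl lie_deriv_sum pdifferentiable_elemF tp) auto
  also have "\<dots> = (\<Sum>js\<in>J. \<Sum>p=1..length t. \<Sum>q=1..length (t @ [(p, Sto K)]).
        elemF f a b (js @ [j]) ((t @ [(p, Sto K)]) @ [(q, Sto K)]) x) / 2 ^ (s_nodes t div 2)"
    unfolding J_def
    by (intro arg_cong[where f = "\<lambda>s. s / _"] sum.cong refl lie_deriv_elemF[OF Ck_node_fun _ _ Ck_f] tp col)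
      auto
  finally show ?thesis unfolding J_def K_def add_sto_pair_def by simp
qed

lemma half_sum_lie_deriv_bcol_twice:
  assumes "t \<in> LTS" "length t < 2 * n"
  shows "1/2 * (\<Sum>j\<in>UNIV. lie_deriv (bcol b j) (lie_deriv (bcol b j) (tree_term f a b t)) x) =
    (\<Sum>p=1..length t. \<Sum>q=1..Suc (length t). tree_term f a b (add_sto_pair t p q) x)"
proof -
  define J where "J = {js::'m list. length js = s_nodes t div 2}"
  define E where "E js p q = elemF f a b js (add_sto_pair t p q) x" for js p q
  let ?P = "{1..length t}" and ?Q = "{1..Suc (length t)}"
  have "1/2 * (\<Sum>j\<in>UNIV. lie_deriv (bcol b j) (lie_deriv (bcol b j) (tree_term f a b t)) x) =
      (\<Sum>j\<in>UNIV. \<Sum>js\<in>J. \<Sum>p\<in>?P. \<Sum>q\<in>?Q. E (js @ [j]) p q) / 2 ^ Suc (s_nodes t div 2)"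
    by (simp add: lie_deriv_bcol_twice_tree_term[OF assms] J_def E_def sum_divide_distrib[symmetric])
  also have "(\<Sum>j\<in>UNIV. \<Sum>js\<in>J. \<Sum>p\<in>?P. \<Sum>q\<in>?Q. E (js @ [j]) p q) =
      (\<Sum>p\<in>?P. \<Sum>q\<in>?Q. \<Sum>js\<in>J. \<Sum>j\<in>UNIV. E (js @ [j]) p q)"
  proof -
    have "(\<Sum>j\<in>UNIV. \<Sum>js\<in>J. \<Sum>p\<in>?P. \<Sum>q\<in>?Q. E (js @ [j]) p q) =
        (\<Sum>js\<in>J. \<Sum>p\<in>?P. \<Sum>j\<in>UNIV. \<Sum>q\<in>?Q. E (js @ [j]) p q)"
      by (subst sum.swap) (intro sum.cong refl sum.swap)
    also have "\<dots> = (\<Sum>p\<in>?P. \<Sum>js\<in>J. \<Sum>q\<in>?Q. \<Sum>j\<in>UNIV. E (js @ [j]) p q)"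
      by (subst sum.swap) (intro sum.cong refl sum.swap)
    also have "\<dots> = (\<Sum>p\<in>?P. \<Sum>q\<in>?Q. \<Sum>js\<in>J. \<Sum>j\<in>UNIV. E (js @ [j]) p q)"
      by (intro sum.cong refl sum.swap)
    finally show ?thesis .
  qed
  also have "(\<Sum>p\<in>?P. \<Sum>q\<in>?Q. \<Sum>js\<in>J. \<Sum>j\<in>UNIV. E (js @ [j]) p q) / 2 ^ Suc (s_nodes t div 2) =
      (\<Sum>p\<in>?P. \<Sum>q\<in>?Q. (\<Sum>js\<in>J. \<Sum>j\<in>UNIV. E (js @ [j]) p q) / 2 ^ Suc (s_nodes t div 2))"
    by (simp only: sum_divide_distrib)
  also have "\<dots> = (\<Sum>p\<in>?P. \<Sum>q\<in>?Q. tree_term f a b (add_sto_pair t p q) x)"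
    by (intro sum.cong refl)
      (simp add: tree_term_altdef s_nodes_add_sto_pair sum_lists_length_Suc J_def E_def)
  finally show ?thesis .
qed

lemma L0_tree_sum_step:
  assumes "m < n"
  shows "L0 a b (\<lambda>x. \<Sum>t\<in>trees_of_order m. tree_term f a b t x) x =
    (\<Sum>t\<in>trees_of_order (Suc m). tree_term f a b t x)"
proof -
  define U where "U = (\<lambda>x. \<Sum>t\<in>trees_of_order m. tree_term f a b t x)"
  have t: "t \<in> LTS" "length t < 2 * n" if "t \<in> trees_of_order m" for t
    using that LTS_length_le[of t] assms unfolding trees_of_order_def by auto
  have Ck_t: "Ck 2 (tree_term f a b t)" if "t \<in> trees_of_order m" for t
    using Ck_tree_term t that by blast
  have pd_t: "pdifferentiable k (tree_term f a b t) y" if "t \<in> trees_of_order m" for t k y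
    using Ck_t[OF that] by (rule Ck_imp_pdifferentiable) simp
  have pd_Dt: "pdifferentiable k (lie_deriv (bcol b j) (tree_term f a b t)) y"
    if "t \<in> trees_of_order m" for t j k y
  proof (rule Ck_imp_pdifferentiable)
    show "Ck 1 (lie_deriv (bcol b j) (tree_term f a b t))"
      using Ck_t[OF that] Ck_b_entry by (intro Ck_lie_deriv) (simp_all add: numeral_2_eq_2 bcol_def)
  qed simp
  have A: "lie_deriv a U x = (\<Sum>t\<in>trees_of_order m. \<Sum>p=1..length t. tree_term f a b (t @ [(p, Det)]) x)"
    unfolding U_def by (auto simp: lie_deriv_sum finite_trees_of_order pd_t lie_deriv_tree_term_Det t
        intro!: sum.cong)
  have second: "lie_deriv (bcol b j) (lie_deriv (bcol b j) U) x =
      (\<Sum>t\<in>trees_of_order m. lie_deriv (bcol b j) (lie_deriv (bcol b j) (tree_term f a b t)) x)" for j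
  proof -
    have "lie_deriv (bcol b j) U = (\<lambda>y. \<Sum>t\<in>trees_of_order m. lie_deriv (bcol b j) (tree_term f a b t) y)"
      unfolding U_def by (rule ext, rule lie_deriv_sum) (auto simp: finite_trees_of_order pd_t)
    then show ?thesis by (simp add: lie_deriv_sum finite_trees_of_order pd_Dt)
  qed
  have "1/2 * (\<Sum>j\<in>UNIV. lie_deriv (bcol b j) (lie_deriv (bcol b j) U) x) =
      (\<Sum>t\<in>trees_of_order m. 1/2 * (\<Sum>j\<in>UNIV. lie_deriv (bcol b j) (lie_deriv (bcol b j) (tree_term f a b t)) x))"
    unfolding second by (subst sum.swap) (simp add: sum_distrib_left)
  also have "\<dots> = (\<Sum>t\<in>trees_of_order m. \<Sum>p=1..length t. \<Sum>q=1..Suc (length t). tree_term f a b (add_sto_pair t p q) x)"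
    by (intro sum.cong refl half_sum_lie_deriv_bcol_twice t)
  finally have B: "1/2 * (\<Sum>j\<in>UNIV. lie_deriv (bcol b j) (lie_deriv (bcol b j) U) x) = \<dots>" .
  have "Ck 2 U" unfolding U_def by (intro Ck_sum finite_trees_of_order Ck_t)
  then show ?thesis
    unfolding U_def[symmetric] L0_eq_lie_derivs[OF \<open>Ck 2 U\<close> Ck_b_entry] A B sum_trees_of_order_Suc
    by (simp add: sum.distrib)
qed

lemma L0_power_tree_sum: "m \<le> n \<Longrightarrow> (L0 a b ^^ m) f = (\<lambda>x. \<Sum>t\<in>trees_of_order m. tree_term f a b t x)"
proof (induction m)
  case 0
  then show ?case by (simp add: trees_of_order_0 tree_term_root)
next
  case (Suc m)
  then show ?case by (auto intro!: ext simp: L0_tree_sum_step)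
qed

end

theorem mainTheorem5:
  fixes n :: nat
    and f :: "real^'d::finite \<Rightarrow> real"
    and a :: "real^'d \<Rightarrow> real^'d"
    and b :: "real^'d \<Rightarrow> real^'m::finite^'d"
    and x0 :: "real^'d"
  assumes "Ck (2 * n) f"
    and "\<forall>I. Ck (2 * n) (\<lambda>y. a y $ I)"
    and "\<forall>I j. Ck (2 * n + 1) (\<lambda>y. b y $ I $ j)"
  shows "((L0 a b) ^^ n) f x0 =
     (\<Sum>t \<in> {t \<in> LTS. rho t = n}. \<Sum>js \<in> {js::'m list. length js = s_nodes t div 2}.
        elemF f a b js t x0 / 2 ^ (s_nodes t div 2))"
proof -
  interpret smooth_coefficients n f a b
    using assms by unfold_locales
  show ?thesis
    using L0_power_tree_sum[of n] by (simp add: trees_of_order_def tree_term_def)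
qed

end
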